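(* Let $X$ be a regular space and $f\in H^\infty$. Then the weak-star closure in $X'$ of $fH^\infty=\{fh:h\in H^\infty\}$ equals $[f]_{X'}$.
   Context: A regular space is a Banach space $X$ of analytic functions on $\mathbb{D}$ such that (i) $X\subseteq H^1$; (ii) the analytic polynomials and the functions analytic in a neighbourhood of $\overline{\mathbb{D}}$ are dense in $X$; (iii) for every $\ell\in X^*$, $\limsup_{n\to\infty}|\ell(z^n)|^{1/n}\le1$. The Cauchy dual $X'$ is the space of analytic $g$ on $\mathbb{D}$ for which $f\mapsto\lim_{r\to1^-}\int_{\partial\mathbb{D}}f(r\zeta)\overline{g(r\zeta)}dm(\zeta)$ is bounded on $X$; it is identified with $X^*$ through this pairing and equipped with the weak-star topology; $H^\infty\subset X'$. $[f]_{X'}$ is the weak-star closure in $X'$ of $\{pf: p\text{ analytic polynomial}\}$. *)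

theory Defs
  imports "HOL-Analysis.Analysis" "HOL-Computational_Algebra.Polynomial"
    "HOL-Library.Liminf_Limsup"
begin

abbreviation unit_disc :: "complex set" where
  "unit_disc \<equiv> ball 0 1"

definition circle_mean :: "real \<Rightarrow> (complex \<Rightarrow> complex) \<Rightarrow> complex" where
  "circle_mean r F = integral {0..2*pi} (\<lambda>t. F (complex_of_real r * cis t)) / complex_of_real (2*pi)"

definition H1 :: "(complex \<Rightarrow> complex) set" where
  "H1 = {f. f holomorphic_on unit_disc \<and>
        (\<exists>C. \<forall>r. 0 \<le> r \<and> r < 1 \<longrightarrow>
           integral {0..2*pi} (\<lambda>t. cmod (f (complex_of_real r * cis t))) / (2*pi) \<le> C)}"

definition Hinf :: "(complex \<Rightarrow> complex) set" where
  "Hinf = {f. f holomorphic_on unit_disc \<and> (\<exists>C. \<forall>z\<in>unit_disc. cmod (f z) \<le> C)}"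

definition analytic_polys :: "(complex \<Rightarrow> complex) set" where
  "analytic_polys = {(\<lambda>z. poly p z) | p :: complex poly. True}"

text \<open>Banach space (X, N) of analytic functions on the disc: X a set of functions,
  N a complete norm on X; elements are identified when they agree on the disc.\<close>
definition banach_fun_space :: "(complex \<Rightarrow> complex) set \<Rightarrow> ((complex \<Rightarrow> complex) \<Rightarrow> real) \<Rightarrow> bool" where
  "banach_fun_space X N \<longleftrightarrow>
     (\<forall>f\<in>X. f holomorphic_on unit_disc) \<and>
     (\<lambda>z. 0) \<in> X \<and>
     (\<forall>f\<in>X. \<forall>g\<in>X. (\<lambda>z. f z + g z) \<in> X) \<and>
     (\<forall>f\<in>X. \<forall>c. (\<lambda>z. c * f z) \<in> X) \<and>
     (\<forall>f\<in>X. \<forall>g\<in>X. N (\<lambda>z. f z + g z) \<le> N f + N g) \<and>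
     (\<forall>f\<in>X. \<forall>c. N (\<lambda>z. c * f z) = cmod c * N f) \<and>
     (\<forall>f\<in>X. 0 \<le> N f) \<and>
     (\<forall>f\<in>X. N f = 0 \<longleftrightarrow> (\<forall>z\<in>unit_disc. f z = 0)) \<and>
     (\<forall>s. (\<forall>n. s n \<in> X) \<and>
          (\<forall>e>0. \<exists>M. \<forall>m\<ge>M. \<forall>n\<ge>M. N (\<lambda>z. s m z - s n z) < e) \<longrightarrow>
          (\<exists>f\<in>X. (\<lambda>n. N (\<lambda>z. s n z - f z)) \<longlonglongrightarrow> 0))"

definition bounded_functional ::
  "(complex \<Rightarrow> complex) set \<Rightarrow> ((complex \<Rightarrow> complex) \<Rightarrow> real) \<Rightarrow> ((complex \<Rightarrow> complex) \<Rightarrow> complex) \<Rightarrow> bool" where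
  "bounded_functional X N l \<longleftrightarrow>
     (\<forall>f\<in>X. \<forall>g\<in>X. l (\<lambda>z. f z + g z) = l f + l g) \<and>
     (\<forall>f\<in>X. \<forall>c. l (\<lambda>z. c * f z) = c * l f) \<and>
     (\<exists>C. \<forall>f\<in>X. cmod (l f) \<le> C * N f)"

definition regular_fun_space :: "(complex \<Rightarrow> complex) set \<Rightarrow> ((complex \<Rightarrow> complex) \<Rightarrow> real) \<Rightarrow> bool" where
  "regular_fun_space X N \<longleftrightarrow>
     banach_fun_space X N \<and>
     X \<subseteq> H1 \<and>
     analytic_polys \<subseteq> X \<and>
     (\<forall>f\<in>X. \<forall>e>0. \<exists>p\<in>analytic_polys. N (\<lambda>z. f z - p z) < e) \<and>
     {g. \<exists>R>1. g holomorphic_on ball 0 R} \<subseteq> X \<and>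
     (\<forall>f\<in>X. \<forall>e>0. \<exists>g. (\<exists>R>1. g holomorphic_on ball 0 R) \<and> N (\<lambda>z. f z - g z) < e) \<and>
     (\<forall>l. bounded_functional X N l \<longrightarrow>
        limsup (\<lambda>n. ereal (root n (cmod (l (\<lambda>z. z ^ n))))) \<le> 1)"

definition cauchy_pairing :: "(complex \<Rightarrow> complex) \<Rightarrow> (complex \<Rightarrow> complex) \<Rightarrow> complex" where
  "cauchy_pairing f g = Lim (at_left (1::real)) (\<lambda>r. circle_mean r (\<lambda>z. f z * cnj (g z)))"

definition cauchy_dual :: "(complex \<Rightarrow> complex) set \<Rightarrow> ((complex \<Rightarrow> complex) \<Rightarrow> real) \<Rightarrow> (complex \<Rightarrow> complex) set" where
  "cauchy_dual X N = {g. g holomorphic_on unit_disc \<and>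
     (\<forall>f\<in>X. \<exists>L. ((\<lambda>r. circle_mean r (\<lambda>z. f z * cnj (g z))) \<longlongrightarrow> L) (at_left (1::real))) \<and>
     (\<exists>C. \<forall>f\<in>X. cmod (cauchy_pairing f g) \<le> C * N f)}"

text \<open>Weak-star closure in X' (topology sigma(X', X)) of a set S, via basic neighbourhoods.\<close>
definition weak_star_closure ::
  "(complex \<Rightarrow> complex) set \<Rightarrow> ((complex \<Rightarrow> complex) \<Rightarrow> real) \<Rightarrow> (complex \<Rightarrow> complex) set \<Rightarrow> (complex \<Rightarrow> complex) set" where
  "weak_star_closure X N S = {g \<in> cauchy_dual X N.
     \<forall>F e. finite F \<and> F \<subseteq> X \<and> e > 0 \<longrightarrow>
       (\<exists>s\<in>S. \<forall>f\<in>F. cmod (cauchy_pairing f s - cauchy_pairing f g) < e)}"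

definition dual_invariant_subspace ::
  "(complex \<Rightarrow> complex) set \<Rightarrow> ((complex \<Rightarrow> complex) \<Rightarrow> real) \<Rightarrow> (complex \<Rightarrow> complex) \<Rightarrow> (complex \<Rightarrow> complex) set" where
  "dual_invariant_subspace X N f = weak_star_closure X N {(\<lambda>z. p z * f z) | p. p \<in> analytic_polys}"

end

theory Submission
  imports Defs "HOL-Complex_Analysis.Complex_Analysis"
begin

text \<open>Riesz factorisation \<open>\<phi> = p\<^sub>1 p\<^sub>2\<close> with \<open>p\<^sub>1, p\<^sub>2 \<in> H\<^sup>2\<close> shows that the
  dilations \<open>\<phi>(s \<cdot>)\<close> converge to \<open>\<phi>\<close> in \<open>L\<^sup>1\<close> uniformly on all circles. This makes the pairing
  exist, and it lets one replace \<open>f h\<close> by \<open>f \<cdot> h(\<rho> \<cdot>)\<close>: moving the dilation from \<open>\<phi>\<close> onto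
  \<open>f (h - h(\<rho> \<cdot>))\<close> leaves a function that is uniformly small on a smaller disc. The Taylor
  polynomials of \<open>h(\<rho> \<cdot>)\<close> converge uniformly on the disc, so polynomial multiples of \<open>f\<close> approximate
  \<open>f h\<close> weak-star. The reverse inclusion holds because polynomials are bounded.\<close>

section \<open>Fourier analysis on circles\<close>

lemma integral_cis_of_int:
  fixes m :: int
  shows "integral {0..2*pi} (\<lambda>t. cis (of_int m * t)) = (if m = 0 then 2*pi else 0)"
proof (cases "m = 0")
  case True then show ?thesis by (simp add: scaleR_conv_of_real)
next
  case False
  have nz: "(\<i> * of_int m :: complex) \<noteq> 0" using False by simp
  have "integral {0..2*pi} (\<lambda>t. exp ((\<i> * of_int m) * complex_of_real t))
      = (exp ((\<i> * of_int m) * of_real (2*pi)) - 1) / (\<i> * of_int m)"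
    by (rule integral_exp) (use nz in auto)
  also have "exp ((\<i> * of_int m) * of_real (2*pi)) = 1"
    using exp_plus_2pin[of 0 m] by (simp add: mult_ac)
  finally have "integral {0..2*pi} (\<lambda>t. exp ((\<i> * of_int m) * complex_of_real t)) = 0" by simp
  moreover have "(\<lambda>t. cis (of_int m * t)) = (\<lambda>t. exp ((\<i> * of_int m) * complex_of_real t))"
    by (auto simp: cis_conv_exp mult_ac)
  ultimately show ?thesis using False by simp
qed

lemma integral_cis_power_cnj:
  "integral {0..2*pi} (\<lambda>t. cis t ^ j * cnj (cis t ^ k)) = (if j = k then 2*pi else 0)"
proof -
  have "cis t ^ j * cnj (cis t ^ k) = cis (of_int (int j - int k) * t)" for t
  proof -
    have "cis t ^ j * cnj (cis t ^ k) = cis (real j * t) * cis (- (real k * t))"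
      by (simp add: Complex.DeMoivre cis_cnj)
    also have "\<dots> = cis (of_int (int j - int k) * t)"
      by (simp add: cis_mult algebra_simps)
    finally show ?thesis .
  qed
  then show ?thesis using integral_cis_of_int[of "int j - int k"] by auto
qed

lemma integral_uniform_limit_tendsto:
  fixes f :: "nat \<Rightarrow> real \<Rightarrow> 'b::banach"
  assumes "\<And>n. continuous_on {a..b} (f n)" and "uniform_limit {a..b} f g sequentially"
  shows "(\<lambda>n. integral {a..b} (f n)) \<longlonglongrightarrow> integral {a..b} g"
proof -
  obtain I J where I: "\<And>n. (f n has_integral I n) {a..b}" and J: "(g has_integral J) {a..b}"
    and IJ: "I \<longlonglongrightarrow> J"
    using uniform_limit_integral[OF assms(2,1)] by auto
  have "(\<lambda>n. integral {a..b} (f n)) = I" using I by (auto simp: integral_unique)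
  moreover have "integral {a..b} g = J" using J by (rule integral_unique)
  ultimately show ?thesis using IJ by simp
qed

lemma continuous_on_circle:
  assumes "W holomorphic_on ball 0 R" and "0 \<le> b" "b < R"
  shows "continuous_on A (\<lambda>t. W (of_real b * cis t))"
proof -
  have "continuous_on (ball 0 R) W" by (rule holomorphic_on_imp_continuous_on[OF assms(1)])
  moreover have "(\<lambda>t. of_real b * cis t) ` A \<subseteq> ball 0 R" using assms by (auto simp: norm_mult)
  ultimately show ?thesis
    by (intro continuous_on_compose2[where f = "\<lambda>t. of_real b * cis t" and g = W])
       (auto intro!: continuous_intros)
qed

lemma integral_cis_series_sums:
  fixes c :: "nat \<Rightarrow> complex" and g :: "real \<Rightarrow> complex"
  assumes summable: "summable (\<lambda>k. norm (c k))" and g: "continuous_on {0..2*pi} g"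
  shows "(\<lambda>k. c k * integral {0..2*pi} (\<lambda>t. cis t ^ k * g t)) sums
           integral {0..2*pi} (\<lambda>t. (\<Sum>k. c k * cis t ^ k) * g t)"
proof -
  obtain B where "\<forall>x\<in>g ` {0..2*pi}. norm x \<le> B"
    using compact_imp_bounded[OF compact_continuous_image[OF g compact_Icc]] by (auto simp: bounded_iff)
  then have B: "\<And>t. t \<in> {0..2*pi} \<Longrightarrow> norm (g t) \<le> B" by blast
  define f where "f = (\<lambda>k t. c k * cis t ^ k * g t)"
  have "uniform_limit {0..2*pi} (\<lambda>n t. \<Sum>k<n. f k t) (\<lambda>t. \<Sum>k. f k t) sequentially"
  proof (rule Weierstrass_m_test)
    show "norm (f k t) \<le> norm (c k) * B" if "t \<in> {0..2*pi}" for k t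
      using B[OF that] by (simp add: f_def norm_mult norm_power mult_left_mono)
    show "summable (\<lambda>k. norm (c k) * B)" using summable by (rule summable_mult2)
  qed
  then have "(\<lambda>n. integral {0..2*pi} (\<lambda>t. \<Sum>k<n. f k t)) \<longlonglongrightarrow> integral {0..2*pi} (\<lambda>t. \<Sum>k. f k t)"
    by (intro integral_uniform_limit_tendsto) (auto simp: f_def intro!: continuous_intros g)
  moreover have "integral {0..2*pi} (\<lambda>t. \<Sum>k<n. f k t)
      = (\<Sum>k<n. c k * integral {0..2*pi} (\<lambda>t. cis t ^ k * g t))" for n
  proof -
    have "integral {0..2*pi} (f k) = c k * integral {0..2*pi} (\<lambda>t. cis t ^ k * g t)" for k
      by (simp add: f_def mult.assoc)
    moreover have "f k integrable_on {0..2*pi}" for k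
      unfolding f_def by (intro integrable_continuous_real continuous_intros g)
    ultimately show ?thesis by (simp add: integral_sum)
  qed
  moreover have "(\<Sum>k. f k t) = (\<Sum>k. c k * cis t ^ k) * g t" for t
  proof -
    have "summable (\<lambda>k. c k * cis t ^ k)"
      by (rule summable_norm_cancel) (use summable in \<open>simp add: norm_mult norm_power\<close>)
    then show ?thesis unfolding f_def by (simp add: suminf_mult2)
  qed
  ultimately show ?thesis unfolding sums_def by simp
qed

section \<open>Taylor coefficients at the origin\<close>

definition taylor_coeff :: "(complex \<Rightarrow> complex) \<Rightarrow> nat \<Rightarrow> complex" where
  "taylor_coeff W k = (deriv ^^ k) W 0 / fact k"

lemma taylor_coeff_sums:
  assumes "W holomorphic_on ball 0 R" "norm z < R"
  shows "(\<lambda>k. taylor_coeff W k * z ^ k) sums W z"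
  using holomorphic_power_series[OF assms(1), of z] assms(2) by (simp add: taylor_coeff_def)

lemma norm_taylor_coeff_le:
  assumes hol: "W holomorphic_on ball 0 R" and s: "0 < s" "s < R"
    and B: "\<And>z. norm z = s \<Longrightarrow> norm (W z) \<le> B"
  shows "norm (taylor_coeff W k) \<le> B / s ^ k"
proof -
  have sub: "cball 0 s \<subseteq> ball (0::complex) R" using s by auto
  have "norm ((deriv ^^ k) W 0) \<le> fact k * B / s ^ k"
  proof (rule Cauchy_inequality)
    show "W holomorphic_on ball 0 s"
      using hol sub ball_subset_cball by (meson holomorphic_on_subset subset_trans)
    show "continuous_on (cball 0 s) W"
      using holomorphic_on_imp_continuous_on[OF holomorphic_on_subset[OF hol sub]] .
    show "norm (W x) \<le> B" if "norm (0 - x) = s" for x using B[of x] that by simp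
  qed (rule s)
  then show ?thesis by (simp add: taylor_coeff_def norm_divide field_simps)
qed

lemma summable_taylor_coeff_circle:
  assumes hol: "W holomorphic_on ball 0 R" and b: "0 \<le> b" "b < R"
  shows "summable (\<lambda>k. norm (taylor_coeff W k * of_real b ^ k))"
proof -
  define s where "s = (b + R) / 2"
  have s: "0 < s" "s < R" "b < s" using b by (auto simp: s_def)
  have "continuous_on (sphere 0 s) W"
    using holomorphic_on_imp_continuous_on[OF hol] by (rule continuous_on_subset) (use s in auto)
  then have "bounded (W ` sphere 0 s)"
    using compact_imp_bounded compact_continuous_image compact_sphere by blast
  then obtain B where "\<forall>w\<in>W ` sphere 0 s. norm w \<le> B" by (auto simp: bounded_iff)
  then have B: "\<And>z. norm z = s \<Longrightarrow> norm (W z) \<le> B" by auto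
  have "norm (norm (taylor_coeff W k * of_real b ^ k)) \<le> B * (b / s) ^ k" for k
  proof -
    have "norm (taylor_coeff W k) * b ^ k \<le> B / s ^ k * b ^ k"
      using b(1) by (intro mult_right_mono norm_taylor_coeff_le[OF hol s(1,2) B] zero_le_power)
    then show ?thesis using b s by (simp add: power_divide norm_mult norm_power)
  qed
  moreover have "norm (b / s) < 1" using b s by simp
  ultimately show ?thesis
    by (intro summable_comparison_test[OF _ summable_mult[OF summable_geometric]]) auto
qed

lemma taylor_expansion_circle:
  assumes hol: "W holomorphic_on ball 0 R" and b: "0 \<le> b" "b < R"
  shows "W (of_real b * cis t) = (\<Sum>k. (taylor_coeff W k * of_real b ^ k) * cis t ^ k)"
proof -
  have "(\<lambda>k. taylor_coeff W k * (of_real b * cis t) ^ k) sums W (of_real b * cis t)"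
    by (rule taylor_coeff_sums[OF hol]) (use b in \<open>simp add: norm_mult\<close>)
  then show ?thesis by (simp add: sums_iff power_mult_distrib mult.assoc)
qed

lemma integral_circle_cnj_cis_power:
  assumes "W holomorphic_on ball 0 R" and "0 \<le> b" "b < R"
  shows "integral {0..2*pi} (\<lambda>t. W (of_real b * cis t) * cnj (cis t ^ k))
       = 2 * pi * (taylor_coeff W k * of_real b ^ k)"
proof -
  define c where "c = (\<lambda>j. taylor_coeff W j * of_real b ^ j)"
  have "(\<lambda>j. c j * integral {0..2*pi} (\<lambda>t. cis t ^ j * cnj (cis t ^ k))) sums
           integral {0..2*pi} (\<lambda>t. (\<Sum>j. c j * cis t ^ j) * cnj (cis t ^ k))"
    unfolding c_def
    by (rule integral_cis_series_sums[OF summable_taylor_coeff_circle[OF assms]]) (intro continuous_intros)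
  moreover have "(\<lambda>j. c j * integral {0..2*pi} (\<lambda>t. cis t ^ j * cnj (cis t ^ k)))
        = (\<lambda>j. if j = k then 2 * pi * c k else 0)"
    by (auto simp: integral_cis_power_cnj simp del: complex_cnj_power)
  ultimately have "(\<lambda>j. if j = k then 2 * pi * c k else 0) sums
           integral {0..2*pi} (\<lambda>t. W (of_real b * cis t) * cnj (cis t ^ k))"
    by (simp add: c_def taylor_expansion_circle[OF assms, symmetric])
  then show ?thesis using sums_single[of k "\<lambda>_. 2 * pi * c k"] sums_unique2 by (fastforce simp: c_def)
qed

lemma integral_circle_pairing_sums:
  assumes holF: "F holomorphic_on ball 0 R1" and a: "0 \<le> a" "a < R1"
    and holW: "W holomorphic_on ball 0 R2" and b: "0 \<le> b" "b < R2"
  shows "(\<lambda>k. 2 * pi * (taylor_coeff F k * cnj (taylor_coeff W k) * of_real (a * b) ^ k)) sums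
           integral {0..2*pi} (\<lambda>t. F (of_real a * cis t) * cnj (W (of_real b * cis t)))"
proof -
  have "integral {0..2*pi} (\<lambda>t. cis t ^ j * cnj (W (of_real b * cis t)))
      = cnj (integral {0..2*pi} (\<lambda>t. W (of_real b * cis t) * cnj (cis t ^ j)))" for j
    by (simp add: integral_cnj mult.commute)
  also have "\<dots> j = 2 * pi * cnj (taylor_coeff W j * of_real b ^ j)" for j
    by (simp add: integral_circle_cnj_cis_power[OF holW b] del: complex_cnj_power)
  finally have "(\<lambda>j. (taylor_coeff F j * of_real a ^ j) * integral {0..2*pi} (\<lambda>t. cis t ^ j * cnj (W (of_real b * cis t))))
      = (\<lambda>k. 2 * pi * (taylor_coeff F k * cnj (taylor_coeff W k) * of_real (a * b) ^ k))"
    by (auto simp: power_mult_distrib)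
  moreover have "(\<lambda>j. (taylor_coeff F j * of_real a ^ j) * integral {0..2*pi} (\<lambda>t. cis t ^ j * cnj (W (of_real b * cis t)))) sums
      integral {0..2*pi} (\<lambda>t. (\<Sum>j. (taylor_coeff F j * of_real a ^ j) * cis t ^ j) * cnj (W (of_real b * cis t)))"
    by (intro integral_cis_series_sums[OF summable_taylor_coeff_circle[OF holF a]]
        continuous_intros continuous_on_circle[OF holW b])
  ultimately show ?thesis by (simp add: taylor_expansion_circle[OF holF a, symmetric])
qed

lemma taylor_coeff_eqI:
  fixes c :: complex
  assumes hol: "W holomorphic_on ball 0 R" and r: "0 < r" "r < R"
    and "integral {0..2*pi} (\<lambda>t. W (of_real r * cis t) * cnj (cis t ^ k)) = 2 * pi * (c * of_real r ^ k)"
  shows "taylor_coeff W k = c"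
  using integral_circle_cnj_cis_power[OF hol, of r k] assms by simp

lemma dilation_in_ball:
  assumes "0 \<le> s" "s \<le> 1" "z \<in> ball (0::complex) R"
  shows "of_real s * z \<in> ball 0 R"
  using assms mult_left_le_one_le[of "norm z" s] by (simp add: norm_mult)

lemma holomorphic_on_dilation:
  assumes "H holomorphic_on ball 0 R" and "0 \<le> s" "s \<le> 1"
  shows "(\<lambda>z. H (of_real s * z)) holomorphic_on ball 0 R"
proof (rule holomorphic_on_compose_gen[where g = H and t = "ball 0 R", unfolded o_def])
  show "(\<lambda>z::complex. of_real s * z) ` ball 0 R \<subseteq> ball 0 R"
    using dilation_in_ball[OF assms(2,3)] by blast
qed (intro holomorphic_intros assms(1))+

lemma taylor_coeff_dilation:
  assumes hol: "H holomorphic_on ball 0 R" and s: "0 \<le> s" "s \<le> 1" and R: "0 < R"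
  shows "taylor_coeff (\<lambda>z. H (of_real s * z)) k = taylor_coeff H k * of_real s ^ k"
proof -
  define r where "r = R / 2"
  have r: "0 < r" "r < R" using R by (auto simp: r_def)
  show ?thesis
  proof (rule taylor_coeff_eqI[OF holomorphic_on_dilation[OF hol s] r])
    have "integral {0..2*pi} (\<lambda>t. H (of_real s * (of_real r * cis t)) * cnj (cis t ^ k))
        = integral {0..2*pi} (\<lambda>t. H (of_real (s * r) * cis t) * cnj (cis t ^ k))"
      by (simp add: mult.assoc)
    also have "\<dots> = 2 * pi * (taylor_coeff H k * of_real (s * r) ^ k)"
      by (rule integral_circle_cnj_cis_power[OF hol])
         (use s r in \<open>auto intro: le_less_trans[OF mult_left_le_one_le]\<close>)
    finally show "integral {0..2*pi} (\<lambda>t. H (of_real s * (of_real r * cis t)) * cnj (cis t ^ k))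
        = 2 * pi * (taylor_coeff H k * of_real s ^ k * of_real r ^ k)"
      by (simp add: power_mult_distrib mult_ac)
  qed
qed

lemma taylor_coeff_diff:
  assumes holF: "F holomorphic_on ball 0 R" and holG: "G holomorphic_on ball 0 R" and R: "0 < R"
  shows "taylor_coeff (\<lambda>z. F z - G z) k = taylor_coeff F k - taylor_coeff G k"
proof (rule taylor_coeff_eqI)
  define r where "r = R / 2"
  show r: "0 < r" "r < R" using R by (auto simp: r_def)
  show "(\<lambda>z. F z - G z) holomorphic_on ball 0 R" by (intro holomorphic_intros holF holG)
  have "(\<lambda>t. F (of_real r * cis t) * cnj (cis t ^ k)) integrable_on {0..2*pi}"
    "(\<lambda>t. G (of_real r * cis t) * cnj (cis t ^ k)) integrable_on {0..2*pi}"
    by (intro integrable_continuous_real continuous_intros continuous_on_circle[OF holF]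
        continuous_on_circle[OF holG]; use r in simp)+
  then have "integral {0..2*pi} (\<lambda>t. (F (of_real r * cis t) - G (of_real r * cis t)) * cnj (cis t ^ k))
     = integral {0..2*pi} (\<lambda>t. F (of_real r * cis t) * cnj (cis t ^ k))
       - integral {0..2*pi} (\<lambda>t. G (of_real r * cis t) * cnj (cis t ^ k))"
    by (simp add: integral_diff algebra_simps)
  also have "\<dots> = 2 * pi * ((taylor_coeff F k - taylor_coeff G k) * of_real r ^ k)"
    using integral_circle_cnj_cis_power[OF holF, of r k] integral_circle_cnj_cis_power[OF holG, of r k] r
    by (simp add: algebra_simps)
  finally show "integral {0..2*pi} (\<lambda>t. (F (of_real r * cis t) - G (of_real r * cis t)) * cnj (cis t ^ k))
      = 2 * pi * ((taylor_coeff F k - taylor_coeff G k) * of_real r ^ k)" .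
qed

section \<open>Integral means and dilations\<close>

abbreviation circle_L1 :: "(complex \<Rightarrow> complex) \<Rightarrow> real \<Rightarrow> real" where
  "circle_L1 F r \<equiv> integral {0..2*pi} (\<lambda>t. norm (F (of_real r * cis t)))"

abbreviation circle_L2 :: "(complex \<Rightarrow> complex) \<Rightarrow> real \<Rightarrow> real" where
  "circle_L2 F r \<equiv> integral {0..2*pi} (\<lambda>t. (norm (F (of_real r * cis t)))\<^sup>2)"

lemma parseval_circle:
  assumes hol: "W holomorphic_on ball 0 R" and b: "0 \<le> b" "b < R"
  shows "(\<lambda>k. 2 * pi * ((norm (taylor_coeff W k))\<^sup>2 * (b * b) ^ k)) sums circle_L2 W b"
proof -
  have c: "continuous_on {0..2*pi} (\<lambda>t. (norm (W (of_real b * cis t)))\<^sup>2)"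
    by (intro continuous_intros continuous_on_circle[OF hol b])
  have "integral {0..2*pi} (\<lambda>t. W (of_real b * cis t) * cnj (W (of_real b * cis t)))
      = integral {0..2*pi} (\<lambda>t. complex_of_real ((norm (W (of_real b * cis t)))\<^sup>2))"
    by (simp only: complex_norm_square)
  also have "\<dots> = of_real (circle_L2 W b)"
    by (rule integral_unique[OF has_integral_of_real[OF integrable_integral[OF integrable_continuous_real[OF c]]]])
  finally have "(\<lambda>k. 2 * pi * (taylor_coeff W k * cnj (taylor_coeff W k) * of_real (b * b) ^ k))
      sums of_real (circle_L2 W b)"
    using integral_circle_pairing_sums[OF hol b hol b] by simp
  moreover have "(\<lambda>k. 2 * pi * (taylor_coeff W k * cnj (taylor_coeff W k) * of_real (b * b) ^ k))
      = (\<lambda>k. complex_of_real (2 * pi * ((norm (taylor_coeff W k))\<^sup>2 * (b * b) ^ k)))"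
    by (auto simp flip: complex_norm_square)
  ultimately show ?thesis by (simp only: sums_of_real_iff)
qed

lemma circle_L2_mono:
  assumes "W holomorphic_on ball 0 R" and "0 \<le> r" "r \<le> s" "s < R"
  shows "circle_L2 W r \<le> circle_L2 W s"
proof (rule sums_le[OF _ parseval_circle[OF assms(1)] parseval_circle[OF assms(1)]])
  fix k
  have "(r * r) ^ k \<le> (s * s) ^ k" using assms by (intro power_mono mult_mono) auto
  then show "2 * pi * ((norm (taylor_coeff W k))\<^sup>2 * (r * r) ^ k)
      \<le> 2 * pi * ((norm (taylor_coeff W k))\<^sup>2 * (s * s) ^ k)"
    by (intro mult_left_mono) auto
qed (use assms in auto)

lemma summable_taylor_coeff_sq_H2:
  assumes hol: "W holomorphic_on ball 0 1"
    and C: "\<And>r. 0 \<le> r \<Longrightarrow> r < 1 \<Longrightarrow> circle_L2 W r \<le> C"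
  shows "summable (\<lambda>k. (norm (taylor_coeff W k))\<^sup>2)"
proof (rule summableI_nonneg_bounded)
  fix n
  define P where "P = (\<lambda>r. \<Sum>k<n. 2 * pi * ((norm (taylor_coeff W k))\<^sup>2 * (r * r) ^ k))"
  have "P r \<le> C" if r: "0 \<le> r" "r < 1" for r
  proof -
    note S = parseval_circle[OF hol r]
    have "P r \<le> circle_L2 W r"
      unfolding P_def sums_unique[OF S] by (intro sum_le_suminf[OF sums_summable[OF S]]) auto
    then show ?thesis using C[OF r] by linarith
  qed
  then have "eventually (\<lambda>r. P r \<le> C) (at_left (1::real))"
    unfolding eventually_at_left_field by (intro exI[of _ 0]) auto
  moreover have "(P \<longlongrightarrow> P 1) (at_left 1)"
    unfolding P_def by (intro tendsto_intros)
  ultimately have "P 1 \<le> C" by (intro tendsto_upperbound) auto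
  then show "(\<Sum>k<n. (norm (taylor_coeff W k))\<^sup>2) \<le> C / (2 * pi)"
    by (simp add: P_def field_simps sum_distrib_left)
qed simp

lemma eventually_at_left_1_unit_interval: "eventually (\<lambda>r. 0 < r \<and> r < (1::real)) (at_left 1)"
  unfolding eventually_at_left_field by (rule exI[of _ 0]) auto

lemma eventually_at_left_1_obtain:
  assumes "eventually P (at_left (1::real))"
  obtains s where "0 < s" "s < 1" "P s"
proof -
  obtain s where "(0 < s \<and> s < 1) \<and> P s"
    using eventually_happens'[OF trivial_limit_at_left_real eventually_conj[OF eventually_at_left_1_unit_interval assms]]
    by blast
  then show ?thesis using that by blast
qed

lemma circle_L2_dilation_diff_le:
  assumes hol: "H holomorphic_on ball 0 1" and summ: "summable (\<lambda>k. (norm (taylor_coeff H k))\<^sup>2)"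
    and s: "0 \<le> s" "s \<le> 1" and r: "0 \<le> r" "r < 1"
  shows "circle_L2 (\<lambda>z. H z - H (of_real s * z)) r
       \<le> 2 * pi * (\<Sum>k. (norm (taylor_coeff H k))\<^sup>2 * (1 - s ^ k)\<^sup>2)"
proof -
  define D where "D = (\<lambda>z. H z - H (of_real s * z))"
  have holD: "D holomorphic_on ball 0 1"
    unfolding D_def by (intro holomorphic_intros hol holomorphic_on_dilation[OF hol s])
  have "norm (1 - of_real s ^ k :: complex) = 1 - s ^ k" for k
  proof -
    have "1 - of_real s ^ k = (of_real (1 - s ^ k) :: complex)" by simp
    then show ?thesis using s by (simp add: power_le_one del: of_real_diff of_real_power)
  qed
  moreover have "taylor_coeff D k = taylor_coeff H k * (1 - of_real s ^ k)" for k
    unfolding D_def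
    using taylor_coeff_diff[OF hol holomorphic_on_dilation[OF hol s], of k] taylor_coeff_dilation[OF hol s, of k]
    by (simp add: algebra_simps)
  ultimately have coeff: "(norm (taylor_coeff D k))\<^sup>2 = (norm (taylor_coeff H k))\<^sup>2 * (1 - s ^ k)\<^sup>2" for k
    by (simp add: norm_mult power_mult_distrib)
  have bound: "(norm (taylor_coeff H k))\<^sup>2 * (1 - s ^ k)\<^sup>2 \<le> (norm (taylor_coeff H k))\<^sup>2" for k
    using s by (intro mult_left_le) (auto simp: power_le_one)
  have "(\<lambda>k. 2 * pi * ((norm (taylor_coeff H k))\<^sup>2 * (1 - s ^ k)\<^sup>2)) sums
      (2 * pi * (\<Sum>k. (norm (taylor_coeff H k))\<^sup>2 * (1 - s ^ k)\<^sup>2))"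
    by (intro sums_mult summable_sums summable_comparison_test[OF _ summ]) (use bound in auto)
  moreover have "(r * r) ^ k \<le> 1" for k using r by (intro power_le_one) (auto simp: mult_le_one)
  ultimately have "circle_L2 D r \<le> 2 * pi * (\<Sum>k. (norm (taylor_coeff H k))\<^sup>2 * (1 - s ^ k)\<^sup>2)"
    by (intro sums_le[OF _ parseval_circle[OF holD r]])
       (auto simp: coeff intro!: mult_left_mono mult_right_le_one_le)
  then show ?thesis by (simp add: D_def)
qed

lemma H2_dilation_close:
  assumes hol: "H holomorphic_on ball 0 1" and summ: "summable (\<lambda>k. (norm (taylor_coeff H k))\<^sup>2)"
    and e: "e > 0"
  shows "eventually (\<lambda>s. \<forall>r\<in>{0..<1}. circle_L2 (\<lambda>z. H z - H (of_real s * z)) r \<le> e) (at_left 1)"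
proof -
  define a where "a = (\<lambda>k (s::real). (norm (taylor_coeff H k))\<^sup>2 * (1 - s ^ k)\<^sup>2)"
  have lim: "((\<lambda>s. a k s) \<longlongrightarrow> 0) (at_left 1)" for k
    unfolding a_def by (auto intro!: tendsto_eq_intros)
  have bnd: "eventually (\<lambda>(k, s). norm (a k s) \<le> (norm (taylor_coeff H k))\<^sup>2) (at_top \<times>\<^sub>F at_left (1::real))"
    unfolding eventually_prod_filter
  proof (intro exI conjI allI impI)
    show "eventually (\<lambda>k::nat. True) at_top" by simp
    show "eventually (\<lambda>s. 0 < s \<and> s < (1::real)) (at_left 1)"
      by (rule eventually_at_left_1_unit_interval)
    show "case (k, s) of (k, s) \<Rightarrow> norm (a k s) \<le> (norm (taylor_coeff H k))\<^sup>2"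
      if "0 < s \<and> s < 1" for k s
      using that by (auto simp: a_def power_le_one intro!: mult_left_le)
  qed
  have "((\<lambda>s. \<Sum>k. a k s) \<longlongrightarrow> 0) (at_left 1)"
    using tannerys_theorem[OF lim bnd summ] by simp
  then have "eventually (\<lambda>s. 2 * pi * (\<Sum>k. a k s) < e) (at_left 1)"
    using e by (intro order_tendstoD(2)) (auto intro!: tendsto_eq_intros)
  moreover have "eventually (\<lambda>s. 0 < s \<and> s < (1::real)) (at_left 1)"
    by (rule eventually_at_left_1_unit_interval)
  ultimately show ?thesis
  proof eventually_elim
    case (elim s)
    then show ?case
      using circle_L2_dilation_diff_le[OF hol summ, of s] by (fastforce simp: a_def)
  qed
qed

lemma integral_norm_mult_diff_le:
  fixes A A' B B' :: "real \<Rightarrow> complex"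
  assumes cont: "continuous_on {a..b} A" "continuous_on {a..b} A'" "continuous_on {a..b} B"
      "continuous_on {a..b} B'"
    and l: "0 < l"
  shows "integral {a..b} (\<lambda>t. norm (A t * B t - A' t * B' t))
    \<le> l / 2 * integral {a..b} (\<lambda>t. (norm (A t))\<^sup>2) + integral {a..b} (\<lambda>t. (norm (B t - B' t))\<^sup>2) / (2 * l)
      + (l / 2 * integral {a..b} (\<lambda>t. (norm (B' t))\<^sup>2) + integral {a..b} (\<lambda>t. (norm (A t - A' t))\<^sup>2) / (2 * l))"
    (is "_ \<le> ?I")
proof -
  have amgm: "x * y \<le> l / 2 * x\<^sup>2 + y\<^sup>2 / (2 * l)" for x y :: real
  proof -
    have "2 * l * (x * y) \<le> l\<^sup>2 * x\<^sup>2 + y\<^sup>2"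
      using zero_le_power2[of "l * x - y"] by (simp add: power2_eq_square algebra_simps)
    then show ?thesis using l by (simp add: field_simps power2_eq_square)
  qed
  define g where "g = (\<lambda>t. l / 2 * (norm (A t))\<^sup>2 + (norm (B t - B' t))\<^sup>2 / (2 * l)
                          + (l / 2 * (norm (B' t))\<^sup>2 + (norm (A t - A' t))\<^sup>2 / (2 * l)))"
  have le: "norm (A t * B t - A' t * B' t) \<le> g t" for t
  proof -
    have "A t * B t - A' t * B' t = A t * (B t - B' t) + (A t - A' t) * B' t" by (simp add: algebra_simps)
    then have "norm (A t * B t - A' t * B' t) \<le> norm (A t) * norm (B t - B' t) + norm (B' t) * norm (A t - A' t)"
      by (metis norm_triangle_ineq norm_mult mult.commute)
    also have "\<dots> \<le> g t" unfolding g_def by (intro add_mono amgm)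
    finally show ?thesis .
  qed
  have hg: "(g has_integral ?I) {a..b}"
    unfolding g_def
    by (intro has_integral_add has_integral_mult_right has_integral_divide integrable_integral
        integrable_continuous_real continuous_intros cont)
  have "(\<lambda>t. norm (A t * B t - A' t * B' t)) integrable_on {a..b}"
    by (intro integrable_continuous_real continuous_intros cont)
  from integral_le[OF this has_integral_integrable[OF hg] le] show ?thesis
    by (simp add: integral_unique[OF hg])
qed

lemma circle_L1_dilation_diff_product_le:
  assumes h1: "p1 holomorphic_on ball 0 1" and h2: "p2 holomorphic_on ball 0 1"
    and eq: "\<And>z. z \<in> ball 0 1 \<Longrightarrow> phi z = p1 z * p2 z"
    and s: "0 \<le> s" "s \<le> 1" and r: "0 \<le> r" "r < 1" and l: "0 < l"
  shows "circle_L1 (\<lambda>z. phi z - phi (of_real s * z)) r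
    \<le> l / 2 * circle_L2 p1 r + circle_L2 (\<lambda>z. p2 z - p2 (of_real s * z)) r / (2 * l)
      + (l / 2 * circle_L2 p2 (s * r) + circle_L2 (\<lambda>z. p1 z - p1 (of_real s * z)) r / (2 * l))"
proof -
  have sr: "0 \<le> s * r" "s * r < 1" using s r by (auto intro: le_less_trans[OF mult_left_le_one_le])
  have dil: "of_real s * (of_real r * cis t) = of_real (s * r) * cis t" for t
    by (simp add: mult.assoc)
  have "circle_L1 (\<lambda>z. phi z - phi (of_real s * z)) r
      = integral {0..2*pi} (\<lambda>t. norm (p1 (of_real r * cis t) * p2 (of_real r * cis t)
          - p1 (of_real (s * r) * cis t) * p2 (of_real (s * r) * cis t)))"
    using r sr by (simp add: dil eq norm_mult)
  also have "\<dots> \<le> l / 2 * circle_L2 p1 r + circle_L2 (\<lambda>z. p2 z - p2 (of_real s * z)) r / (2 * l)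
      + (l / 2 * circle_L2 p2 (s * r) + circle_L2 (\<lambda>z. p1 z - p1 (of_real s * z)) r / (2 * l))"
    unfolding dil
    by (intro integral_norm_mult_diff_le l continuous_on_circle[OF h1] continuous_on_circle[OF h2] r sr)
  finally show ?thesis .
qed

lemma H1_dilation_close_of_H2_factors:
  assumes h1: "p1 holomorphic_on ball 0 1" and h2: "p2 holomorphic_on ball 0 1"
    and C1: "\<And>r. 0 \<le> r \<Longrightarrow> r < 1 \<Longrightarrow> circle_L2 p1 r \<le> C"
    and C2: "\<And>r. 0 \<le> r \<Longrightarrow> r < 1 \<Longrightarrow> circle_L2 p2 r \<le> C"
    and eq: "\<And>z. z \<in> ball 0 1 \<Longrightarrow> phi z = p1 z * p2 z"
    and eta: "eta > 0"
  shows "eventually (\<lambda>s. \<forall>r\<in>{0..<1}. circle_L1 (\<lambda>z. phi z - phi (of_real s * z)) r \<le> eta) (at_left 1)"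
proof -
  have "0 \<le> circle_L2 p1 0"
    by (intro integral_nonneg integrable_continuous_real continuous_intros continuous_on_circle[OF h1]) auto
  then have C0: "0 \<le> C" using C1[of 0] by linarith
  define l where "l = eta / (2 * (C + 1))"
  define e where "e = l * eta / 2"
  have l: "l > 0" and e: "e > 0" using eta C0 by (simp_all add: l_def e_def)
  have "summable (\<lambda>k. (norm (taylor_coeff p1 k))\<^sup>2)"
    by (rule summable_taylor_coeff_sq_H2[OF h1 C1])
  from H2_dilation_close[OF h1 this e]
  have "eventually (\<lambda>s. \<forall>r\<in>{0..<1}. circle_L2 (\<lambda>z. p1 z - p1 (of_real s * z)) r \<le> e) (at_left 1)" .
  moreover have "summable (\<lambda>k. (norm (taylor_coeff p2 k))\<^sup>2)"
    by (rule summable_taylor_coeff_sq_H2[OF h2 C2])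
  from H2_dilation_close[OF h2 this e]
  have "eventually (\<lambda>s. \<forall>r\<in>{0..<1}. circle_L2 (\<lambda>z. p2 z - p2 (of_real s * z)) r \<le> e) (at_left 1)" .
  moreover have "eventually (\<lambda>s. 0 < s \<and> s < (1::real)) (at_left 1)"
    by (rule eventually_at_left_1_unit_interval)
  ultimately show ?thesis
  proof eventually_elim
    case (elim s)
    show ?case
    proof
      fix r :: real assume "r \<in> {0..<1}"
      then have r: "0 \<le> r" "r < 1" by auto
      have sr: "0 \<le> s * r" "s * r < 1" using elim r by (auto intro: le_less_trans[OF mult_left_le_one_le])
      have "circle_L1 (\<lambda>z. phi z - phi (of_real s * z)) r
          \<le> l / 2 * circle_L2 p1 r + circle_L2 (\<lambda>z. p2 z - p2 (of_real s * z)) r / (2 * l)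
            + (l / 2 * circle_L2 p2 (s * r) + circle_L2 (\<lambda>z. p1 z - p1 (of_real s * z)) r / (2 * l))"
        using elim r l by (intro circle_L1_dilation_diff_product_le[OF h1 h2 eq]) auto
      also have "\<dots> \<le> l / 2 * C + e / (2 * l) + (l / 2 * C + e / (2 * l))"
        using elim r l C1[OF r] C2[OF sr] by (intro add_mono mult_left_mono divide_right_mono) auto
      also have "\<dots> = l * C + eta / 2" using l by (simp add: e_def field_simps)
      also have "\<dots> \<le> eta" using C0 eta by (simp add: l_def field_simps)
      finally show "circle_L1 (\<lambda>z. phi z - phi (of_real s * z)) r \<le> eta" .
    qed
  qed
qed

section \<open>Factorisation through Blaschke factors\<close>

definition blaschke_factor :: "complex \<Rightarrow> complex \<Rightarrow> complex" where
  "blaschke_factor a z = (z - a) / (1 - cnj a * z)"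

lemma blaschke_denominator_nonzero:
  assumes "norm a * norm z < 1"
  shows "1 - cnj a * z \<noteq> 0"
proof
  assume "1 - cnj a * z = 0"
  then have "norm a * norm z = 1" by (metis complex_mod_cnj eq_iff_diff_eq_0 norm_mult norm_one)
  with assms show False by simp
qed

lemma blaschke_factor_identity:
  "(norm (1 - cnj a * z))\<^sup>2 - (norm (z - a))\<^sup>2 = (1 - (norm a)\<^sup>2) * (1 - (norm z)\<^sup>2)"
proof -
  have "complex_of_real ((norm (1 - cnj a * z))\<^sup>2 - (norm (z - a))\<^sup>2)
      = (1 - cnj a * z) * cnj (1 - cnj a * z) - (z - a) * cnj (z - a)"
    by (simp only: of_real_diff complex_norm_square)
  also have "\<dots> = (1 - a * cnj a) * (1 - z * cnj z)" by (simp add: algebra_simps)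
  also have "\<dots> = complex_of_real ((1 - (norm a)\<^sup>2) * (1 - (norm z)\<^sup>2))"
    by (simp only: of_real_diff of_real_mult complex_norm_square of_real_1)
  finally show ?thesis by (simp only: of_real_eq_iff)
qed

lemma norm_blaschke_factor_le_1:
  assumes "norm a < 1" "norm z \<le> 1"
  shows "norm (blaschke_factor a z) \<le> 1"
proof -
  have "norm a * norm z < 1" using assms by (metis le_less_trans mult_left_le norm_ge_zero)
  then have d: "1 - cnj a * z \<noteq> 0" by (rule blaschke_denominator_nonzero)
  have "0 \<le> (1 - (norm a)\<^sup>2) * (1 - (norm z)\<^sup>2)"
    using assms by (intro mult_nonneg_nonneg) (auto simp: power_le_one abs_square_le_1)
  then have "(norm (z - a))\<^sup>2 \<le> (norm (1 - cnj a * z))\<^sup>2" using blaschke_factor_identity[of a z] by linarith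
  then have "norm (z - a) \<le> norm (1 - cnj a * z)" by (rule power2_le_imp_le) simp
  then show ?thesis using d by (simp add: blaschke_factor_def norm_divide divide_le_eq_1)
qed

lemma norm_blaschke_factor_eq_1:
  assumes "norm a < 1" "norm z = 1"
  shows "norm (blaschke_factor a z) = 1"
proof -
  have d: "1 - cnj a * z \<noteq> 0" by (rule blaschke_denominator_nonzero) (use assms in simp)
  have "(norm (z - a))\<^sup>2 = (norm (1 - cnj a * z))\<^sup>2" using blaschke_factor_identity[of a z] assms by simp
  then have "norm (z - a) = norm (1 - cnj a * z)" by (simp add: power2_eq_iff_nonneg)
  then show ?thesis using d by (simp add: blaschke_factor_def norm_divide)
qed

lemma holomorphic_blaschke_factor:
  assumes "\<And>z. z \<in> S \<Longrightarrow> norm a * norm z < 1"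
  shows "blaschke_factor a holomorphic_on S"
  unfolding blaschke_factor_def
  by (intro holomorphic_intros) (use assms blaschke_denominator_nonzero in blast)

lemma circle_integral_ge_centre:
  assumes hol: "F holomorphic_on ball 0 R" and R: "1 < R"
  shows "2 * pi * norm (F 0) \<le> integral {0..2*pi} (\<lambda>t. norm (F (cis t)))"
proof -
  have "integral {0..2*pi} (\<lambda>t. F (of_real 1 * cis t) * cnj (cis t ^ 0))
      = 2 * pi * (taylor_coeff F 0 * of_real 1 ^ 0)"
    by (rule integral_circle_cnj_cis_power[OF hol]) (use R in auto)
  then have "integral {0..2*pi} (\<lambda>t. F (cis t)) = 2 * pi * F 0" by (simp add: taylor_coeff_def)
  moreover have "continuous_on {0..2*pi} (\<lambda>t. F (cis t))"
    using continuous_on_circle[OF hol, of 1] R by simp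
  then have "norm (integral {0..2*pi} (\<lambda>t. F (cis t))) \<le> integral {0..2*pi} (\<lambda>t. norm (F (cis t)))"
    by (intro integral_norm_bound_integral integrable_continuous_real continuous_intros) auto
  ultimately show ?thesis by (simp add: norm_mult)
qed

lemma compact_zeros:
  fixes F :: "complex \<Rightarrow> complex"
  assumes "continuous_on K F" "compact K"
  shows "compact {z \<in> K. F z = 0}"
proof -
  have "closed {z \<in> K. F z = 0}"
    by (rule continuous_closed_preimage_constant[OF assms(1) compact_imp_closed[OF assms(2)]])
  then have "compact ({z \<in> K. F z = 0} \<inter> K)" using assms(2) by blast
  moreover have "{z \<in> K. F z = 0} \<inter> K = {z \<in> K. F z = 0}" by blast
  ultimately show ?thesis by simp
qed

lemma zero_free_ball_beyond_1:
  fixes F :: "complex \<Rightarrow> complex"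
  assumes hol: "F holomorphic_on ball 0 R" and R: "1 < R"
    and nz: "\<And>z. norm z \<le> 1 \<Longrightarrow> F z \<noteq> 0"
  obtains R' where "1 < R'" "R' \<le> R" "\<And>z. z \<in> ball 0 R' \<Longrightarrow> F z \<noteq> 0"
proof -
  define R2 where "R2 = (1 + R) / 2"
  have R2: "1 < R2" "R2 < R" using R by (auto simp: R2_def)
  have cont: "continuous_on (cball 0 R2) F"
    by (rule holomorphic_on_imp_continuous_on[OF holomorphic_on_subset[OF hol]]) (use R2 in auto)
  define Z where "Z = {z \<in> cball 0 R2. F z = 0}"
  show ?thesis
  proof (cases "Z = {}")
    case True
    then show ?thesis using R2 by (intro that[of R2]) (auto simp: Z_def)
  next
    case False
    obtain z0 where z0: "z0 \<in> Z" "\<And>z. z \<in> Z \<Longrightarrow> norm z0 \<le> norm z"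
      using continuous_attains_inf[OF compact_zeros[OF cont compact_cball] False[unfolded Z_def], of norm]
      by (auto simp: Z_def intro: continuous_intros)
    have "norm z0 > 1" using z0(1) nz by (force simp: Z_def)
    show ?thesis
    proof (rule that[of "min R2 (norm z0)"])
      show "1 < min R2 (norm z0)" using R2 \<open>norm z0 > 1\<close> by simp
      show "F z \<noteq> 0" if "z \<in> ball 0 (min R2 (norm z0))" for z
        using z0(2)[of z] that by (auto simp: Z_def)
    qed (use R2 in simp)
  qed
qed

definition square_factorable :: "(complex \<Rightarrow> complex) \<Rightarrow> bool" where
  "square_factorable F \<longleftrightarrow> (\<exists>B G R. 1 < R \<and> B holomorphic_on ball 0 R \<and> G holomorphic_on ball 0 R \<and>
      (\<forall>z\<in>ball 0 R. F z = B z * (G z)\<^sup>2) \<and> (\<forall>z. norm z \<le> 1 \<longrightarrow> norm (B z) \<le> 1) \<and>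
      (\<forall>z. norm z = 1 \<longrightarrow> norm (B z) = 1))"

lemma square_factorable_if_zero_free:
  assumes hol: "F holomorphic_on ball 0 R" and R: "1 < R"
    and nz: "\<And>z. norm z \<le> 1 \<Longrightarrow> F z \<noteq> 0"
  shows "square_factorable F"
proof -
  obtain R' where R': "1 < R'" "R' \<le> R" and nz': "\<And>z. z \<in> ball 0 R' \<Longrightarrow> F z \<noteq> 0"
    using zero_free_ball_beyond_1[OF hol R nz] by blast
  have hol': "F holomorphic_on ball 0 R'"
    by (rule holomorphic_on_subset[OF hol]) (use R' in auto)
  obtain G where "G holomorphic_on ball 0 R'" "\<And>z. z \<in> ball 0 R' \<Longrightarrow> F z = G z ^ 2"
    using contractible_imp_holomorphic_sqrt[OF hol' convex_imp_contractible[OF convex_ball] nz'] by blast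
  then show ?thesis unfolding square_factorable_def using R'
    by (intro exI[of _ "\<lambda>z. 1"] exI[of _ G] exI[of _ R']) auto
qed

lemma divide_blaschke_factor:
  assumes hol: "F holomorphic_on ball 0 R" and R: "1 < R"
    and a: "F a = 0" "norm a < 1"
    and F1_def: "F1 = (\<lambda>z. (if z = a then deriv F a else F z / (z - a)) * (1 - cnj a * z))"
  shows "F1 holomorphic_on ball 0 R"
    and "\<And>z. 1 - cnj a * z \<noteq> 0 \<Longrightarrow> F z = blaschke_factor a z * F1 z"
    and "a \<noteq> 0 \<Longrightarrow> F1 0 = - F 0 / a"
    and "\<And>t. norm (F1 (cis t)) = norm (F (cis t))"
proof -
  have "(\<lambda>z. if z = a then deriv F a else (F z - F a) / (z - a)) holomorphic_on ball 0 R"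
    by (rule pole_lemma[OF hol]) (use a R in simp)
  also have "(\<lambda>z. if z = a then deriv F a else (F z - F a) / (z - a))
      = (\<lambda>z. if z = a then deriv F a else F z / (z - a))"
    using a(1) by (intro ext) simp
  finally show "F1 holomorphic_on ball 0 R" unfolding F1_def by (intro holomorphic_intros)
  show eq: "F z = blaschke_factor a z * F1 z" if d: "1 - cnj a * z \<noteq> 0" for z
    using a d by (cases "z = a") (simp_all add: blaschke_factor_def F1_def)
  show "a \<noteq> 0 \<Longrightarrow> F1 0 = - F 0 / a" by (simp add: F1_def)
  show "norm (F1 (cis t)) = norm (F (cis t))" for t
  proof -
    have "norm a * norm (cis t) < 1" using a by simp
    then have "norm (F (cis t)) = norm (blaschke_factor a (cis t)) * norm (F1 (cis t))"
      by (simp add: eq[OF blaschke_denominator_nonzero] norm_mult)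
    also have "norm (blaschke_factor a (cis t)) = 1" by (rule norm_blaschke_factor_eq_1) (use a in auto)
    finally show ?thesis by simp
  qed
qed

lemma square_factorable_blaschke_mult:
  assumes F1: "square_factorable F1" and a: "norm a < 1" "a \<noteq> 0"
    and eq: "\<And>z. norm a * norm z < 1 \<Longrightarrow> F z = blaschke_factor a z * F1 z"
  shows "square_factorable F"
proof -
  obtain B1 G1 R1 where R1: "1 < R1" and hB1: "B1 holomorphic_on ball 0 R1"
    and hG1: "G1 holomorphic_on ball 0 R1" and e1: "\<forall>z\<in>ball 0 R1. F1 z = B1 z * (G1 z)\<^sup>2"
    and b1: "\<forall>z. norm z \<le> 1 \<longrightarrow> norm (B1 z) \<le> 1" and b1': "\<forall>z. norm z = 1 \<longrightarrow> norm (B1 z) = 1"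
    using F1 unfolding square_factorable_def by blast
  define R where "R = min R1 (1 / norm a)"
  have small: "norm a * norm z < 1" if "z \<in> ball 0 R" for z
    using that a by (simp add: R_def field_simps)
  show ?thesis unfolding square_factorable_def
  proof (intro exI conjI)
    show "1 < R" using R1 a by (simp add: R_def field_simps)
    show "(\<lambda>z. blaschke_factor a z * B1 z) holomorphic_on ball 0 R"
      by (intro holomorphic_intros holomorphic_blaschke_factor small holomorphic_on_subset[OF hB1])
         (auto simp: R_def)
    show "G1 holomorphic_on ball 0 R" by (rule holomorphic_on_subset[OF hG1]) (auto simp: R_def)
    show "\<forall>z\<in>ball 0 R. F z = blaschke_factor a z * B1 z * (G1 z)\<^sup>2"
      using eq[OF small] e1 by (simp add: R_def mult.assoc)
    show "\<forall>z. norm z \<le> 1 \<longrightarrow> norm (blaschke_factor a z * B1 z) \<le> 1"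
      using norm_blaschke_factor_le_1[OF a(1)] b1 by (simp add: norm_mult mult_le_one)
    show "\<forall>z. norm z = 1 \<longrightarrow> norm (blaschke_factor a z * B1 z) = 1"
      using norm_blaschke_factor_eq_1[OF a(1)] b1' by (simp add: norm_mult)
  qed
qed

text \<open>Dividing out a zero \<open>a\<close> keeps the boundary \<open>L\<^sup>1\<close> norm and multiplies \<open>norm (F 0)\<close> by
  \<open>1 / norm a \<ge> 1 / \<rho>\<close>, so the bound below caps the number of zeros that can be divided out.\<close>

lemma square_factorable_if_zeros_bounded:
  assumes \<rho>: "0 < \<rho>" "\<rho> < 1"
  shows "1 < R \<Longrightarrow> F holomorphic_on ball 0 R \<Longrightarrow> F 0 \<noteq> 0 \<Longrightarrow>
    (\<forall>z. norm z \<le> 1 \<longrightarrow> F z = 0 \<longrightarrow> norm z \<le> \<rho>) \<Longrightarrow>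
    integral {0..2*pi} (\<lambda>t. norm (F (cis t))) < 2 * pi * norm (F 0) / \<rho> ^ n \<Longrightarrow> square_factorable F"
proof (induction n arbitrary: F R)
  case 0
  then show ?case
    using square_factorable_if_zero_free[of F R] circle_integral_ge_centre[of F R] by fastforce
next
  case (Suc n)
  note hol = Suc.prems(2) and R = Suc.prems(1) and F0 = Suc.prems(3) and Z = Suc.prems(4)
  show ?case
  proof (cases "\<forall>z. norm z \<le> 1 \<longrightarrow> F z \<noteq> 0")
    case True then show ?thesis using square_factorable_if_zero_free[OF hol R] by blast
  next
    case False
    then obtain a where a: "norm a \<le> 1" "F a = 0" by blast
    have ar: "norm a \<le> \<rho>" using Z a by blast
    have a1: "norm a < 1" using ar \<rho> by simp
    have a0: "a \<noteq> 0" using a F0 by auto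
    define F1 where "F1 = (\<lambda>z. (if z = a then deriv F a else F z / (z - a)) * (1 - cnj a * z))"
    note F1 = divide_blaschke_factor[OF hol R a(2) a1 F1_def]
    have F10: "F1 0 \<noteq> 0" using F1(3)[OF a0] F0 a0 by simp
    have Z1: "\<forall>z. norm z \<le> 1 \<longrightarrow> F1 z = 0 \<longrightarrow> norm z \<le> \<rho>"
    proof (intro allI impI)
      fix z assume z: "norm z \<le> 1" "F1 z = 0"
      have "norm a * norm z < 1" using a1 z(1) by (metis le_less_trans mult_left_le norm_ge_zero)
      then have "F z = 0" using F1(2)[OF blaschke_denominator_nonzero] z by simp
      then show "norm z \<le> \<rho>" using Z z by blast
    qed
    have "norm (F 0) / \<rho> \<le> norm (F1 0)"
      using ar a0 \<rho> F1(3)[OF a0] by (simp add: norm_divide divide_left_mono)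
    then have "2 * pi * norm (F 0) / \<rho> ^ Suc n \<le> 2 * pi * norm (F1 0) / \<rho> ^ n"
      using \<rho> by (simp add: divide_right_mono mult_left_mono field_simps)
    then have "integral {0..2*pi} (\<lambda>t. norm (F1 (cis t))) < 2 * pi * norm (F1 0) / \<rho> ^ n"
      using Suc.prems(5) F1(4) by simp
    then have "square_factorable F1" by (rule Suc.IH[OF R F1(1) F10 Z1])
    then show ?thesis
      by (rule square_factorable_blaschke_mult[OF _ a1 a0 F1(2)[OF blaschke_denominator_nonzero]])
  qed
qed

lemma square_factorable_if_zero_free_circle:
  assumes hol: "F holomorphic_on ball 0 R" and R: "1 < R" and F0: "F 0 \<noteq> 0"
    and nz: "\<And>z. norm z = 1 \<Longrightarrow> F z \<noteq> 0"
  shows "square_factorable F"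
proof -
  have cont: "continuous_on (cball 0 1) F"
    by (rule holomorphic_on_imp_continuous_on[OF holomorphic_on_subset[OF hol]]) (use R in auto)
  define Z where "Z = {z \<in> cball 0 1. F z = 0}"
  obtain \<rho> where \<rho>: "0 < \<rho>" "\<rho> < 1" and Zr: "\<forall>z. norm z \<le> 1 \<longrightarrow> F z = 0 \<longrightarrow> norm z \<le> \<rho>"
  proof (cases "Z = {}")
    case True
    show ?thesis by (rule that[of "1/2"]) (use True in \<open>auto simp: Z_def\<close>)
  next
    case False
    obtain z0 where z0: "z0 \<in> Z" "\<And>z. z \<in> Z \<Longrightarrow> norm z \<le> norm z0"
      using continuous_attains_sup[OF compact_zeros[OF cont compact_cball] False[unfolded Z_def], of norm]
      by (auto simp: Z_def intro: continuous_intros)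
    have "norm z0 < 1" using z0(1) nz by (force simp: Z_def le_less)
    then show ?thesis using z0 by (intro that[of "max (1/2) (norm z0)"]) (auto simp: Z_def le_max_iff_disj)
  qed
  obtain n where "integral {0..2*pi} (\<lambda>t. norm (F (cis t))) / (2 * pi * norm (F 0)) < (1 / \<rho>) ^ n"
    using real_arch_pow[of "1 / \<rho>"] \<rho> by auto
  then have "integral {0..2*pi} (\<lambda>t. norm (F (cis t))) < 2 * pi * norm (F 0) / \<rho> ^ n"
    using F0 \<rho> by (simp add: field_simps power_divide)
  then show ?thesis by (rule square_factorable_if_zeros_bounded[OF \<rho> R hol F0 Zr])
qed

section \<open>Riesz factorisation of \<open>H\<^sup>1\<close> functions\<close>

lemma norm_le_of_circle_L2:
  assumes hol: "G holomorphic_on ball 0 R" and R: "1 < R"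
    and C: "circle_L2 G 1 \<le> C" and z: "norm z < 1"
  shows "norm (G z) \<le> sqrt (C / (2 * pi)) / (1 - norm z)"
proof -
  define K where "K = sqrt (C / (2 * pi))"
  note S = parseval_circle[OF hol zero_le_one R]
  have "norm (taylor_coeff G k) \<le> K" for k
  proof -
    have "(\<Sum>j\<in>{k}. 2 * pi * ((norm (taylor_coeff G j))\<^sup>2 * (1 * 1) ^ j)) \<le> circle_L2 G 1"
      unfolding sums_unique[OF S] by (intro sum_le_suminf[OF sums_summable[OF S]]) auto
    then have "(norm (taylor_coeff G k))\<^sup>2 \<le> C / (2 * pi)" using C by (simp add: field_simps)
    then show ?thesis unfolding K_def by (simp add: real_le_rsqrt)
  qed
  then have le: "norm (taylor_coeff G k * z ^ k) \<le> K * norm z ^ k" for k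
    by (simp add: norm_mult norm_power mult_right_mono)
  have sg: "summable (\<lambda>k. K * norm z ^ k)" using z by (intro summable_mult summable_geometric) simp
  have sn: "summable (\<lambda>k. norm (taylor_coeff G k * z ^ k))"
    by (rule summable_comparison_test[OF _ sg]) (use le in auto)
  have "norm (G z) = norm (\<Sum>k. taylor_coeff G k * z ^ k)"
    using sums_unique[OF taylor_coeff_sums[OF hol]] z R by simp
  also have "\<dots> \<le> (\<Sum>k. norm (taylor_coeff G k * z ^ k))" by (rule summable_norm[OF sn])
  also have "\<dots> \<le> (\<Sum>k. K * norm z ^ k)" by (rule suminf_le[OF le sn sg])
  also have "\<dots> = K / (1 - norm z)" using z by (simp add: suminf_mult suminf_geometric)
  finally show ?thesis unfolding K_def .
qed

lemma exists_zero_free_circle: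
  fixes psi :: "complex \<Rightarrow> complex"
  assumes hol: "psi holomorphic_on ball 0 1"
    and nc: "\<not> psi constant_on ball 0 1 \<or> (\<forall>z\<in>ball 0 1. psi z \<noteq> 0)"
    and a: "0 \<le> a" "a < 1"
  obtains s where "a < s" "s < 1" "\<And>z. norm z = s \<Longrightarrow> psi z \<noteq> 0"
proof -
  define T where "T = (a + 1) / 2"
  have T: "a < T" "T < 1" using a by (auto simp: T_def)
  define Zs where "Zs = {z \<in> cball 0 T. psi z = 0}"
  have "finite Zs"
  proof (cases "\<forall>z\<in>ball 0 1. psi z \<noteq> 0")
    case True
    then have "Zs = {}" using T by (auto simp: Zs_def)
    then show ?thesis by simp
  next
    case False
    then show ?thesis unfolding Zs_def using nc T
      by (intro holomorphic_compact_finite_zeros[OF hol]) auto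
  qed
  moreover have "infinite {a<..<T}" using T by simp
  ultimately have "{a<..<T} - norm ` Zs \<noteq> {}"
    by (metis finite_Diff2 finite_imageI finite.emptyI)
  then obtain s where s: "s \<in> {a<..<T}" "s \<notin> norm ` Zs" by blast
  show ?thesis
  proof (rule that[of s])
    show "psi z \<noteq> 0" if "norm z = s" for z
      using that s by (auto simp: Zs_def)
  qed (use s T in auto)
qed

lemma holomorphic_factor_zero_power:
  fixes phi :: "complex \<Rightarrow> complex"
  assumes hol: "phi holomorphic_on ball 0 1" and nc: "\<not> phi constant_on ball 0 1"
  obtains m psi where "psi holomorphic_on ball 0 1" "psi 0 \<noteq> 0"
    "\<And>z. z \<in> ball 0 1 \<Longrightarrow> phi z = z ^ m * psi z"
proof (cases "phi 0 = 0")
  case False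
  show ?thesis by (rule that[of phi 0]) (use hol False in auto)
next
  case True
  obtain g r n where n: "0 < n" and r: "0 < r" "ball 0 r \<subseteq> ball (0::complex) 1"
    and hg: "g holomorphic_on ball 0 r" and eq: "\<And>w. w \<in> ball 0 r \<Longrightarrow> phi w = (w - 0) ^ n * g w"
    and gnz: "\<And>w. w \<in> ball 0 r \<Longrightarrow> g w \<noteq> 0"
    using holomorphic_factor_zero_nonconstant[OF hol open_ball connected_ball _ True nc]
    by (metis centre_in_ball zero_less_one)
  define psi where "psi = (\<lambda>z. if z = 0 then g 0 else phi z / z ^ n)"
  have "psi holomorphic_on ball 0 r"
    by (rule holomorphic_transform[OF hg]) (use eq in \<open>auto simp: psi_def\<close>)
  moreover have "psi holomorphic_on (ball 0 1 - {0})"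
    by (rule holomorphic_transform[of "\<lambda>z. phi z / z ^ n"])
       (auto simp: psi_def intro!: holomorphic_intros holomorphic_on_subset[OF hol])
  moreover have "ball 0 1 = ball 0 r \<union> (ball 0 1 - {0::complex})" using r by auto
  ultimately have "psi holomorphic_on ball 0 1" by (metis holomorphic_on_Un open_ball open_delete)
  then show ?thesis
  proof (rule that)
    show "psi 0 \<noteq> 0" using gnz[of 0] r by (simp add: psi_def)
    show "phi z = z ^ n * psi z" if "z \<in> ball 0 1" for z
      using eq[of 0] r n by (cases "z = 0") (auto simp: psi_def)
  qed
qed

lemma circle_L2_le_of_uniform_limit:
  fixes G :: "nat \<Rightarrow> complex \<Rightarrow> complex"
  assumes lim: "uniform_limit (sphere 0 r) G g sequentially" and r: "0 \<le> r"
    and cont: "\<And>n. continuous_on (sphere 0 r) (G n)"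
    and K: "\<And>n z. norm z = r \<Longrightarrow> norm (G n z) \<le> K"
    and C: "\<And>n. circle_L2 (G n) r \<le> C"
  shows "circle_L2 g r \<le> C"
proof -
  have circle: "(\<lambda>t. of_real r * cis t) \<in> {0..2*pi} \<rightarrow> sphere 0 r" using r by (auto simp: norm_mult)
  have "uniform_limit {0..2*pi} (\<lambda>n t. G n (of_real r * cis t)) (\<lambda>t. g (of_real r * cis t)) sequentially"
    by (rule uniform_limit_compose'[OF lim circle])
  moreover have "uniformly_continuous_on (cball 0 K) (\<lambda>w::complex. (norm w)\<^sup>2)"
    by (intro compact_uniformly_continuous continuous_intros compact_cball)
  ultimately have "uniform_limit {0..2*pi} (\<lambda>n t. (norm (G n (of_real r * cis t)))\<^sup>2)
                 (\<lambda>t. (norm (g (of_real r * cis t)))\<^sup>2) sequentially"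
    by (rule uniform_limit_compose_uniformly_continuous_on)
       (use K r in \<open>auto simp: norm_mult intro!: always_eventually\<close>)
  moreover have "continuous_on {0..2*pi} (\<lambda>t. (norm (G n (of_real r * cis t)))\<^sup>2)" for n
    using circle by (intro continuous_intros continuous_on_compose2[OF cont]) auto
  ultimately have "(\<lambda>n. circle_L2 (G n) r) \<longlonglongrightarrow> circle_L2 g r"
    by (rule integral_uniform_limit_tendsto[rotated])
  then show ?thesis by (rule LIMSEQ_le_const2) (use C in auto)
qed

lemma compact_subset_ball_norm_le:
  fixes S :: "'a::real_normed_vector set"
  assumes "compact S" "S \<subseteq> ball 0 R"
  obtains \<rho> where "\<rho> < R" "\<And>z. z \<in> S \<Longrightarrow> norm z \<le> \<rho>"
proof (cases "S = {}")
  case False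
  obtain z0 where "z0 \<in> S" "\<And>z. z \<in> S \<Longrightarrow> norm z \<le> norm z0"
    using continuous_attains_sup[OF assms(1) False, of norm] by (auto intro: continuous_intros)
  then show ?thesis using assms(2) by (intro that[of "norm z0"]) auto
qed (use that[of "R - 1"] in auto)

lemma H2_subsequence_limit:
  fixes G :: "nat \<Rightarrow> complex \<Rightarrow> complex"
  assumes hol: "\<And>n. G n holomorphic_on ball 0 (R n)" and R: "\<And>n. 1 < R n"
    and C: "\<And>n. circle_L2 (G n) 1 \<le> C"
  obtains g q where "g holomorphic_on ball 0 1" "strict_mono q"
    "\<And>z. z \<in> ball 0 1 \<Longrightarrow> (\<lambda>n. G (q n) z) \<longlonglongrightarrow> g z"
    "\<And>r. 0 \<le> r \<Longrightarrow> r < 1 \<Longrightarrow> circle_L2 g r \<le> C"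
proof -
  define K where "K = sqrt (C / (2 * pi))"
  have hol1: "G n holomorphic_on ball 0 1" for n by (rule holomorphic_on_subset[OF hol]) (use R[of n] in auto)
  have bound: "norm (G n z) \<le> K / (1 - norm z)" if "norm z < 1" for n z
    unfolding K_def by (rule norm_le_of_circle_L2[OF hol R C that])
  have "norm (G 0 0) \<le> K" using bound[of 0 0] by simp
  then have K0: "0 \<le> K" using norm_ge_zero[of "G 0 0"] by linarith
  define \<H> where "\<H> = {h. h holomorphic_on ball 0 1 \<and> (\<forall>z\<in>ball 0 1. norm (h z) \<le> K / (1 - norm z))}"
  obtain g q where hg: "g holomorphic_on ball 0 1" and q: "strict_mono q"
    and pointwise: "\<And>z. z \<in> ball 0 1 \<Longrightarrow> (\<lambda>n. G (q n) z) \<longlonglongrightarrow> g z"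
    and uniform: "\<And>S. compact S \<Longrightarrow> S \<subseteq> ball 0 1 \<Longrightarrow> uniform_limit S (G \<circ> q) g sequentially"
  proof (rule Montel[of "ball 0 1" \<H> G])
    show "\<exists>B. \<forall>h\<in>\<H>. \<forall>z\<in>S. norm (h z) \<le> B" if S: "compact S" "S \<subseteq> ball 0 1" for S
    proof -
      obtain \<rho> where \<rho>: "\<rho> < 1" "\<And>z. z \<in> S \<Longrightarrow> norm z \<le> \<rho>"
        using compact_subset_ball_norm_le[OF S] by blast
      have "norm (h z) \<le> K / (1 - \<rho>)" if "h \<in> \<H>" "z \<in> S" for h z
      proof -
        have "norm (h z) \<le> K / (1 - norm z)" using that \<open>S \<subseteq> ball 0 1\<close> by (auto simp: \<H>_def)
        also have "\<dots> \<le> K / (1 - \<rho>)"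
          using \<rho>(1) \<rho>(2)[OF \<open>z \<in> S\<close>] K0 by (intro divide_left_mono) auto
        finally show ?thesis .
      qed
      then show ?thesis by blast
    qed
  qed (use hol1 bound in \<open>auto simp: \<H>_def\<close>)
  show ?thesis
  proof (rule that[OF hg q pointwise])
    fix r :: real assume r: "0 \<le> r" "r < 1"
    have "sphere 0 r \<subseteq> ball (0::complex) 1" using r by auto
    then have "uniform_limit (sphere 0 r) (\<lambda>n. G (q n)) g sequentially"
      using uniform[of "sphere 0 r"] by (simp add: o_def)
    then show "circle_L2 g r \<le> C"
    proof (rule circle_L2_le_of_uniform_limit[OF _ r(1)])
      show "continuous_on (sphere 0 r) (G (q n))" for n
        by (rule holomorphic_on_imp_continuous_on[OF holomorphic_on_subset[OF hol1]]) (use r in auto)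
      show "norm (G (q n) z) \<le> K / (1 - r)" if "norm z = r" for n z
        using bound[of z "q n"] that r by simp
      show "circle_L2 (G (q n)) r \<le> C" for n
        using circle_L2_mono[OF hol[of "q n"] r(1), of 1] R[of "q n"] r C[of "q n"] by simp
    qed
  qed
qed

lemma circle_L2_mult_le:
  assumes hu: "u holomorphic_on ball 0 1" and hg: "g holomorphic_on ball 0 1"
    and u: "\<And>z. z \<in> ball 0 1 \<Longrightarrow> norm (u z) \<le> 1" and r: "0 \<le> r" "r < 1"
  shows "circle_L2 (\<lambda>z. u z * g z) r \<le> circle_L2 g r"
proof (rule integral_le)
  show "(\<lambda>t. (norm (u (of_real r * cis t) * g (of_real r * cis t)))\<^sup>2) integrable_on {0..2*pi}"
    "(\<lambda>t. (norm (g (of_real r * cis t)))\<^sup>2) integrable_on {0..2*pi}"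
    by (intro integrable_continuous_real continuous_intros continuous_on_circle[OF hu r]
        continuous_on_circle[OF hg r])+
  show "(norm (u (of_real r * cis t) * g (of_real r * cis t)))\<^sup>2 \<le> (norm (g (of_real r * cis t)))\<^sup>2" for t
    using u[of "of_real r * cis t"] r
    by (auto simp: norm_mult mult_left_le_one_le intro!: power_mono)
qed

lemma dilation_square_factorisation:
  assumes hpsi: "psi holomorphic_on ball 0 1" and psi0: "psi 0 \<noteq> 0"
    and s: "1/2 \<le> s" "s < 1" and nz: "\<And>z. norm z = s \<Longrightarrow> psi z \<noteq> 0"
    and eqp: "\<And>z. z \<in> ball 0 1 \<Longrightarrow> phi z = z ^ m * psi z"
    and M: "\<And>r. 0 \<le> r \<Longrightarrow> r < 1 \<Longrightarrow> circle_L1 phi r \<le> M"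
  obtains B G R where "1 < R" "B holomorphic_on ball 0 R" "G holomorphic_on ball 0 R"
    "\<And>z. z \<in> ball 0 R \<Longrightarrow> psi (of_real s * z) = B z * (G z)\<^sup>2"
    "\<And>z. norm z \<le> 1 \<Longrightarrow> norm (B z) \<le> 1" "circle_L2 G 1 \<le> M * 2 ^ m"
proof -
  have s0: "0 < s" using s by simp
  have "(\<lambda>z. psi (of_real s * z)) holomorphic_on ball 0 (1 / s)"
  proof (rule holomorphic_on_compose_gen[where g = psi and t = "ball 0 1", unfolded o_def])
    show "(\<lambda>z::complex. of_real s * z) ` ball 0 (1 / s) \<subseteq> ball 0 1"
      using s0 by (auto simp: norm_mult field_simps)
  qed (intro holomorphic_intros hpsi)+
  then have "square_factorable (\<lambda>z. psi (of_real s * z))"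
    using s psi0 nz by (intro square_factorable_if_zero_free_circle) (auto simp: norm_mult field_simps)
  then obtain B G R where R: "1 < R" and hB: "B holomorphic_on ball 0 R" and hG: "G holomorphic_on ball 0 R"
    and eq: "\<forall>z\<in>ball 0 R. psi (of_real s * z) = B z * (G z)\<^sup>2"
    and B1: "\<forall>z. norm z \<le> 1 \<longrightarrow> norm (B z) \<le> 1" and B1': "\<forall>z. norm z = 1 \<longrightarrow> norm (B z) = 1"
    unfolding square_factorable_def by blast
  have "(norm (G (of_real 1 * cis t)))\<^sup>2 = norm (phi (of_real s * cis t)) / s ^ m" for t
  proof -
    have "norm (psi (of_real s * cis t)) = (norm (G (cis t)))\<^sup>2"
      using eq[rule_format, of "cis t"] B1' R by (simp add: norm_mult norm_power)
    moreover have "norm (phi (of_real s * cis t)) = s ^ m * norm (psi (of_real s * cis t))"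
      using eqp[of "of_real s * cis t"] s by (simp add: norm_mult norm_power)
    ultimately show ?thesis using s0 by (simp add: field_simps)
  qed
  then have "circle_L2 G 1 = circle_L1 phi s / s ^ m" by simp
  also have "\<dots> \<le> M / s ^ m" using s by (intro divide_right_mono M) auto
  also have "\<dots> \<le> M * 2 ^ m"
  proof -
    have "0 \<le> circle_L1 phi 0" by (rule integral_nonneg) auto
    then have "0 \<le> M" using M[of 0] by linarith
    moreover have "(1/2) ^ m \<le> s ^ m" using s by (intro power_mono) auto
    then have "1 / s ^ m \<le> 2 ^ m" using s0 by (simp add: field_simps power_divide)
    ultimately show ?thesis by (simp add: divide_inverse mult_left_mono flip: inverse_eq_divide)
  qed
  finally have L2: "circle_L2 G 1 \<le> M * 2 ^ m" .
  show ?thesis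
  proof (rule that[OF R hB hG _ _ L2])
    show "psi (of_real s * z) = B z * (G z)\<^sup>2" if "z \<in> ball 0 R" for z using eq that by blast
    show "norm (B z) \<le> 1" if "norm z \<le> 1" for z using B1 that by blast
  qed
qed

lemma zero_free_circles_tendsto_1:
  fixes psi :: "complex \<Rightarrow> complex"
  assumes hol: "psi holomorphic_on ball 0 1"
    and nc: "\<not> psi constant_on ball 0 1 \<or> (\<forall>z\<in>ball 0 1. psi z \<noteq> 0)"
  obtains s where "\<And>n. 1/2 \<le> s n" "\<And>n. s n < 1" "s \<longlonglongrightarrow> 1" "\<And>n z. norm z = s n \<Longrightarrow> psi z \<noteq> 0"
proof -
  define a where "a = (\<lambda>n::nat. 1 - inverse (real (Suc n)) / 2)"
  have a: "1/2 \<le> a n" "a n < 1" for n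
  proof -
    have "inverse (real (Suc n)) \<le> 1" "0 < inverse (real (Suc n))" by (simp_all add: inverse_le_1_iff)
    then show "1/2 \<le> a n" "a n < 1" by (auto simp: a_def)
  qed
  have "\<forall>n. \<exists>s. a n < s \<and> s < 1 \<and> (\<forall>z. norm z = s \<longrightarrow> psi z \<noteq> 0)"
  proof
    fix n
    have "0 \<le> a n" using a[of n] by linarith
    then obtain s where "a n < s" "s < 1" "\<And>z. norm z = s \<Longrightarrow> psi z \<noteq> 0"
      using exists_zero_free_circle[OF hol nc _ a(2)] by blast
    then show "\<exists>s. a n < s \<and> s < 1 \<and> (\<forall>z. norm z = s \<longrightarrow> psi z \<noteq> 0)" by blast
  qed
  then have "\<exists>s. \<forall>n. a n < s n \<and> s n < 1 \<and> (\<forall>z. norm z = s n \<longrightarrow> psi z \<noteq> 0)"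
    by (rule choice)
  then obtain s where "\<forall>n. a n < s n \<and> s n < 1 \<and> (\<forall>z. norm z = s n \<longrightarrow> psi z \<noteq> 0)"
    by blast
  then have s: "\<And>n. a n < s n" "\<And>n. s n < 1" "\<And>n z. norm z = s n \<Longrightarrow> psi z \<noteq> 0"
    by blast+
  have "a \<longlonglongrightarrow> 1 - 0 / 2"
    unfolding a_def by (intro tendsto_intros LIMSEQ_inverse_real_of_nat) simp
  then have "a \<longlonglongrightarrow> 1" by simp
  then have "s \<longlonglongrightarrow> 1"
  proof (rule tendsto_sandwich[OF _ _ _ tendsto_const, rotated 2])
    show "\<forall>\<^sub>F n in sequentially. a n \<le> s n" using s(1) by (intro always_eventually allI less_imp_le)
    show "\<forall>\<^sub>F n in sequentially. s n \<le> 1" using s(2) by (intro always_eventually allI less_imp_le)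
  qed
  moreover have "1/2 \<le> s n" for n using a(1)[of n] s(1)[of n] by linarith
  ultimately show ?thesis using that s(2,3) by blast
qed

lemma dilation_square_factorisations:
  fixes phi psi :: "complex \<Rightarrow> complex"
  assumes hpsi: "psi holomorphic_on ball 0 1" and psi0: "psi 0 \<noteq> 0"
    and nc: "\<not> psi constant_on ball 0 1 \<or> (\<forall>z\<in>ball 0 1. psi z \<noteq> 0)"
    and eqp: "\<And>z. z \<in> ball 0 1 \<Longrightarrow> phi z = z ^ m * psi z"
    and M: "\<And>r. 0 \<le> r \<Longrightarrow> r < 1 \<Longrightarrow> circle_L1 phi r \<le> M"
  obtains s R :: "nat \<Rightarrow> real" and B G :: "nat \<Rightarrow> complex \<Rightarrow> complex"
  where "s \<longlonglongrightarrow> 1" "\<And>n. 1 < R n" "\<And>n. B n holomorphic_on ball 0 1" "\<And>n. G n holomorphic_on ball 0 (R n)"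
    "\<And>n z. z \<in> ball 0 1 \<Longrightarrow> psi (of_real (s n) * z) = B n z * (G n z)\<^sup>2"
    "\<And>n z. z \<in> ball 0 1 \<Longrightarrow> norm (B n z) \<le> 1" "\<And>n. circle_L2 (G n) 1 \<le> M * 2 ^ m"
proof -
  obtain s where s: "\<And>n. 1/2 \<le> s n" "\<And>n. s n < 1" "s \<longlonglongrightarrow> 1"
    "\<And>n z. norm z = s n \<Longrightarrow> psi z \<noteq> 0"
    using zero_free_circles_tendsto_1[OF hpsi nc] by blast
  define P where "P = (\<lambda>n (B :: complex \<Rightarrow> complex) (G :: complex \<Rightarrow> complex) R.
    1 < R \<and> B holomorphic_on ball 0 R \<and> G holomorphic_on ball 0 R \<and>
    (\<forall>z\<in>ball 0 R. psi (of_real (s n) * z) = B z * (G z)\<^sup>2) \<and>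
    (\<forall>z. norm z \<le> 1 \<longrightarrow> norm (B z) \<le> 1) \<and> circle_L2 G 1 \<le> M * 2 ^ m)"
  have "\<forall>n. \<exists>T. P n (fst T) (fst (snd T)) (snd (snd T))"
  proof
    fix n
    show "\<exists>T. P n (fst T) (fst (snd T)) (snd (snd T))"
    proof (rule dilation_square_factorisation[OF hpsi psi0 s(1)[of n] s(2)[of n] s(4)[of _ n] eqp M])
      fix B G R
      assume "1 < R" "B holomorphic_on ball 0 R" "G holomorphic_on ball 0 R"
        "\<And>z. z \<in> ball 0 R \<Longrightarrow> psi (of_real (s n) * z) = B z * (G z)\<^sup>2"
        "\<And>z. norm z \<le> 1 \<Longrightarrow> norm (B z) \<le> 1" "circle_L2 G 1 \<le> M * 2 ^ m"
      then have "P n B G R" unfolding P_def by blast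
      then show "\<exists>T. P n (fst T) (fst (snd T)) (snd (snd T))" by (intro exI[of _ "(B, G, R)"]) simp
    qed
  qed
  then have "\<exists>T. \<forall>n. P n (fst (T n)) (fst (snd (T n))) (snd (snd (T n)))" by (rule choice)
  then obtain T where T: "\<And>n. P n (fst (T n)) (fst (snd (T n))) (snd (snd (T n)))" by blast
  define B where "B n = fst (T n)" for n
  define G where "G n = fst (snd (T n))" for n
  define R where "R n = snd (snd (T n))" for n
  have BGR: "P n (B n) (G n) (R n)" for n using T[of n] by (simp add: B_def G_def R_def)
  have "1 < R n" and "B n holomorphic_on ball 0 1" and "G n holomorphic_on ball 0 (R n)"
    and "\<And>z. z \<in> ball 0 1 \<Longrightarrow> psi (of_real (s n) * z) = B n z * (G n z)\<^sup>2"
    and "\<And>z. z \<in> ball 0 1 \<Longrightarrow> norm (B n z) \<le> 1" and "circle_L2 (G n) 1 \<le> M * 2 ^ m" for n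
    using BGR[of n] unfolding P_def by (auto intro: holomorphic_on_subset)
  with s(3) show ?thesis by (rule that)
qed

lemma unit_bounded_subsequence_limit:
  fixes B :: "nat \<Rightarrow> complex \<Rightarrow> complex"
  assumes hB: "\<And>n. B n holomorphic_on ball 0 1" and B1: "\<And>n z. z \<in> ball 0 1 \<Longrightarrow> norm (B n z) \<le> 1"
  shows "\<exists>b q. b holomorphic_on ball 0 1 \<and> strict_mono q \<and> (\<forall>z\<in>ball 0 1. (\<lambda>n. B (q n) z) \<longlonglongrightarrow> b z)"
proof (rule Montel[of "ball 0 1" "{h. h holomorphic_on ball 0 1 \<and> (\<forall>z\<in>ball 0 1. norm (h z) \<le> 1)}" B])
  show "\<exists>C. \<forall>h\<in>{h. h holomorphic_on ball 0 1 \<and> (\<forall>z\<in>ball 0 1. norm (h z) \<le> 1)}. \<forall>z\<in>S. norm (h z) \<le> C"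
    if "S \<subseteq> ball 0 1" for S
    using that by (intro exI[of _ 1]) auto
  show "\<exists>b q. b holomorphic_on ball 0 1 \<and> strict_mono q \<and> (\<forall>z\<in>ball 0 1. (\<lambda>n. B (q n) z) \<longlonglongrightarrow> b z)"
    if "b holomorphic_on ball 0 1" "strict_mono q" "\<And>z. z \<in> ball 0 1 \<Longrightarrow> (\<lambda>n. B (q n) z) \<longlonglongrightarrow> b z"
    for b q
    using that by blast
qed (use hB B1 in auto)

text \<open>For \<open>\<phi> = z\<^sup>m \<psi>\<close> in \<open>H\<^sup>1\<close>: factor the dilations \<open>\<psi>(s\<^sub>n z)\<close> on zero-free circles and pass to
  a limit by Montel's theorem.\<close>

lemma H1_square_factorisation_limit:
  fixes phi psi :: "complex \<Rightarrow> complex"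
  assumes hpsi: "psi holomorphic_on ball 0 1" and psi0: "psi 0 \<noteq> 0"
    and nc: "\<not> psi constant_on ball 0 1 \<or> (\<forall>z\<in>ball 0 1. psi z \<noteq> 0)"
    and eqp: "\<And>z. z \<in> ball 0 1 \<Longrightarrow> phi z = z ^ m * psi z"
    and M: "\<And>r. 0 \<le> r \<Longrightarrow> r < 1 \<Longrightarrow> circle_L1 phi r \<le> M"
  obtains b g where "b holomorphic_on ball 0 1" "g holomorphic_on ball 0 1"
    "\<And>z. z \<in> ball 0 1 \<Longrightarrow> norm (b z) \<le> 1" "\<And>z. z \<in> ball 0 1 \<Longrightarrow> psi z = b z * (g z)\<^sup>2"
    "\<And>r. 0 \<le> r \<Longrightarrow> r < 1 \<Longrightarrow> circle_L2 g r \<le> M * 2 ^ m"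
proof (rule dilation_square_factorisations[OF hpsi psi0 nc eqp M])
  fix s R B G
  assume s: "s \<longlonglongrightarrow> 1" and R: "\<And>n. 1 < R n" and hB: "\<And>n. B n holomorphic_on ball 0 1"
    and hG: "\<And>n. G n holomorphic_on ball 0 (R n)"
    and eq: "\<And>n z. z \<in> ball 0 1 \<Longrightarrow> psi (of_real (s n) * z) = B n z * (G n z)\<^sup>2"
    and B1: "\<And>n z. z \<in> ball 0 1 \<Longrightarrow> norm (B n z) \<le> 1" and L2: "\<And>n. circle_L2 (G n) 1 \<le> M * 2 ^ m"
  obtain g q1 where hg: "g holomorphic_on ball 0 1" and q1: "strict_mono q1"
    and limg: "\<And>z. z \<in> ball 0 1 \<Longrightarrow> (\<lambda>n. G (q1 n) z) \<longlonglongrightarrow> g z"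
    and gL2: "\<And>r. 0 \<le> r \<Longrightarrow> r < 1 \<Longrightarrow> circle_L2 g r \<le> M * 2 ^ m"
    by (rule H2_subsequence_limit[of G R "M * 2 ^ m", OF hG R L2]) blast
  have "\<exists>b q2. b holomorphic_on ball 0 1 \<and> strict_mono q2 \<and>
      (\<forall>z\<in>ball 0 1. (\<lambda>n. B (q1 (q2 n)) z) \<longlonglongrightarrow> b z)"
    using hB B1 by (intro unit_bounded_subsequence_limit)
  then obtain b q2 where hb: "b holomorphic_on ball 0 1" and q2: "strict_mono q2"
    and limb: "\<And>z. z \<in> ball 0 1 \<Longrightarrow> (\<lambda>n. B (q1 (q2 n)) z) \<longlonglongrightarrow> b z"
    by blast
  show ?thesis
  proof (rule that[OF hb hg _ _ gL2])
    fix z :: complex assume z: "z \<in> ball 0 1"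
    define q where "q = q1 \<circ> q2"
    have "(\<lambda>n. s (q n)) \<longlonglongrightarrow> 1"
      using LIMSEQ_subseq_LIMSEQ[OF s strict_mono_o[OF q1 q2]] by (simp add: q_def o_def)
    then have "(\<lambda>n. of_real (s (q n)) * z) \<longlonglongrightarrow> z"
      using tendsto_mult_right[OF tendsto_of_real, of _ 1 _ z] by simp
    moreover have "isCont psi z"
      using continuous_on_interior[OF holomorphic_on_imp_continuous_on[OF hpsi]] z by simp
    ultimately have "(\<lambda>n. psi (of_real (s (q n)) * z)) \<longlonglongrightarrow> psi z"
      by (rule isCont_tendsto_compose[rotated])
    then have "(\<lambda>n. B (q n) z * (G (q n) z)\<^sup>2) \<longlonglongrightarrow> psi z"
      by (simp only: eq[OF z])
    moreover have "(\<lambda>n. B (q n) z * (G (q n) z)\<^sup>2) \<longlonglongrightarrow> b z * (g z)\<^sup>2"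
      using limb[OF z] LIMSEQ_subseq_LIMSEQ[OF limg[OF z] q2]
      by (intro tendsto_intros) (simp_all add: q_def o_def)
    ultimately show "psi z = b z * (g z)\<^sup>2" by (rule LIMSEQ_unique)
    have "(\<lambda>n. norm (B (q1 (q2 n)) z)) \<longlonglongrightarrow> norm (b z)" by (intro tendsto_intros limb z)
    then show "norm (b z) \<le> 1" by (rule LIMSEQ_le_const2) (use B1 z in auto)
  qed
qed

theorem H1_square_factorisation:
  fixes phi :: "complex \<Rightarrow> complex"
  assumes hol: "phi holomorphic_on ball 0 1"
    and M: "\<And>r. 0 \<le> r \<Longrightarrow> r < 1 \<Longrightarrow> circle_L1 phi r \<le> M"
  obtains p1 p2 C where "p1 holomorphic_on ball 0 1" "p2 holomorphic_on ball 0 1"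
    "\<And>r. 0 \<le> r \<Longrightarrow> r < 1 \<Longrightarrow> circle_L2 p1 r \<le> C"
    "\<And>r. 0 \<le> r \<Longrightarrow> r < 1 \<Longrightarrow> circle_L2 p2 r \<le> C"
    "\<And>z. z \<in> ball 0 1 \<Longrightarrow> phi z = p1 z * p2 z"
proof (cases "phi constant_on ball 0 1")
  case True
  then obtain c where c: "\<And>z. z \<in> ball 0 1 \<Longrightarrow> phi z = c" unfolding constant_on_def by blast
  show ?thesis
    by (rule that[of "\<lambda>z. c" "\<lambda>z. 1" "2 * pi * ((norm c)\<^sup>2 + 1)"]) (use c in auto)
next
  case False
  obtain m psi where hpsi: "psi holomorphic_on ball 0 1" and psi0: "psi 0 \<noteq> 0"
    and eqp: "\<And>z. z \<in> ball 0 1 \<Longrightarrow> phi z = z ^ m * psi z"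
    using holomorphic_factor_zero_power[OF hol False] by blast
  have "\<not> psi constant_on ball 0 1 \<or> (\<forall>z\<in>ball 0 1. psi z \<noteq> 0)"
    using psi0 by (auto simp: constant_on_def)
  then obtain b g where hb: "b holomorphic_on ball 0 1" and hg: "g holomorphic_on ball 0 1"
    and b1: "\<And>z. z \<in> ball 0 1 \<Longrightarrow> norm (b z) \<le> 1" and eq: "\<And>z. z \<in> ball 0 1 \<Longrightarrow> psi z = b z * (g z)\<^sup>2"
    and gL2: "\<And>r. 0 \<le> r \<Longrightarrow> r < 1 \<Longrightarrow> circle_L2 g r \<le> M * 2 ^ m"
    using H1_square_factorisation_limit[OF hpsi psi0 _ eqp M] by blast
  have u: "norm (z ^ m * b z) \<le> 1" if "z \<in> ball 0 1" for z
    using b1[OF that] that by (simp add: norm_mult norm_power power_le_one mult_le_one)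
  show ?thesis
  proof (rule that[of "\<lambda>z. (z ^ m * b z) * g z" g "M * 2 ^ m", OF _ hg _ gL2])
    show "(\<lambda>z. (z ^ m * b z) * g z) holomorphic_on ball 0 1" by (intro holomorphic_intros hb hg)
    show "circle_L2 (\<lambda>z. (z ^ m * b z) * g z) r \<le> M * 2 ^ m" if "0 \<le> r" "r < 1" for r
    proof -
      have "(\<lambda>z. z ^ m * b z) holomorphic_on ball 0 1" by (intro holomorphic_intros hb)
      from circle_L2_mult_le[OF this hg u that] show ?thesis using gL2[OF that] by linarith
    qed
    show "phi z = z ^ m * b z * g z * g z" if "z \<in> ball 0 1" for z
      using eqp[OF that] eq[OF that] by (simp add: power2_eq_square mult_ac)
  qed
qed

theorem H1_dilation_close:
  fixes phi :: "complex \<Rightarrow> complex"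
  assumes hol: "phi holomorphic_on ball 0 1"
    and M: "\<And>r. 0 \<le> r \<Longrightarrow> r < 1 \<Longrightarrow> circle_L1 phi r \<le> M" and eta: "eta > 0"
  shows "eventually (\<lambda>s. \<forall>r\<in>{0..<1}. circle_L1 (\<lambda>z. phi z - phi (of_real s * z)) r \<le> eta) (at_left 1)"
proof -
  obtain p1 p2 C where "p1 holomorphic_on ball 0 1" "p2 holomorphic_on ball 0 1"
    "\<And>r. 0 \<le> r \<Longrightarrow> r < 1 \<Longrightarrow> circle_L2 p1 r \<le> C" "\<And>r. 0 \<le> r \<Longrightarrow> r < 1 \<Longrightarrow> circle_L2 p2 r \<le> C"
    "\<And>z. z \<in> ball 0 1 \<Longrightarrow> phi z = p1 z * p2 z"
    using H1_square_factorisation[OF hol M] by blast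
  from H1_dilation_close_of_H2_factors[OF this eta] show ?thesis .
qed

section \<open>The Cauchy pairing of \<open>H\<^sup>1\<close> with \<open>H\<^sup>\<infinity>\<close>\<close>

lemma bound_on_disc_nonneg:
  fixes u :: "complex \<Rightarrow> 'a::real_normed_vector"
  assumes "\<And>z. z \<in> ball 0 1 \<Longrightarrow> norm (u z) \<le> K"
  shows "0 \<le> K"
proof -
  have "norm (u 0) \<le> K" using assms[of 0] by simp
  then show ?thesis using norm_ge_zero[of "u 0"] by linarith
qed

lemma H1E:
  assumes "phi \<in> H1"
  obtains M where "phi holomorphic_on ball 0 1" "\<And>r. 0 \<le> r \<Longrightarrow> r < 1 \<Longrightarrow> circle_L1 phi r \<le> M"
proof -
  obtain C where "phi holomorphic_on ball 0 1"
    "\<And>r. 0 \<le> r \<Longrightarrow> r < 1 \<Longrightarrow> circle_L1 phi r / (2*pi) \<le> C"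
    using assms unfolding H1_def by blast
  then show ?thesis by (intro that[of "2 * pi * C"]) (auto simp: field_simps)
qed

lemma H1_holomorphic: "phi \<in> H1 \<Longrightarrow> phi holomorphic_on ball 0 1"
  by (simp add: H1_def)

lemma HinfE:
  assumes "u \<in> Hinf"
  obtains K where "u holomorphic_on ball 0 1" "\<And>z. z \<in> ball 0 1 \<Longrightarrow> norm (u z) \<le> K"
  using assms unfolding Hinf_def by blast

lemma HinfI:
  assumes "u holomorphic_on ball 0 1" "\<And>z. z \<in> ball 0 1 \<Longrightarrow> norm (u z) \<le> K"
  shows "u \<in> Hinf"
  using assms unfolding Hinf_def by blast

lemma Hinf_holomorphic: "u \<in> Hinf \<Longrightarrow> u holomorphic_on ball 0 1"
  by (simp add: Hinf_def)

lemma Hinf_mult: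
  assumes "f \<in> Hinf" "g \<in> Hinf"
  shows "(\<lambda>z. f z * g z) \<in> Hinf"
proof -
  obtain Kf where "f holomorphic_on ball 0 1" "\<And>z. z \<in> ball 0 1 \<Longrightarrow> norm (f z) \<le> Kf"
    using HinfE[OF assms(1)] by blast
  moreover obtain Kg where "g holomorphic_on ball 0 1" "\<And>z. z \<in> ball 0 1 \<Longrightarrow> norm (g z) \<le> Kg"
    using HinfE[OF assms(2)] by blast
  ultimately show ?thesis
    by (intro HinfI[of _ "Kf * Kg"] holomorphic_intros)
       (auto simp: norm_mult intro!: mult_mono order_trans[OF norm_ge_zero])
qed

lemma Hinf_diff:
  assumes "f \<in> Hinf" "g \<in> Hinf"
  shows "(\<lambda>z. f z - g z) \<in> Hinf"
proof -
  obtain Kf where "f holomorphic_on ball 0 1" "\<And>z. z \<in> ball 0 1 \<Longrightarrow> norm (f z) \<le> Kf"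
    using HinfE[OF assms(1)] by blast
  moreover obtain Kg where "g holomorphic_on ball 0 1" "\<And>z. z \<in> ball 0 1 \<Longrightarrow> norm (g z) \<le> Kg"
    using HinfE[OF assms(2)] by blast
  ultimately show ?thesis
    by (intro HinfI[of _ "Kf + Kg"] holomorphic_intros)
       (auto intro!: order_trans[OF norm_triangle_ineq4] add_mono)
qed

lemma Hinf_dilation:
  assumes "h \<in> Hinf" "0 \<le> s" "s \<le> 1"
  shows "(\<lambda>z. h (of_real s * z)) \<in> Hinf"
proof -
  obtain K where "h holomorphic_on ball 0 1" "\<And>z. z \<in> ball 0 1 \<Longrightarrow> norm (h z) \<le> K"
    using HinfE[OF assms(1)] by blast
  then show ?thesis
    using dilation_in_ball[OF assms(2,3)] by (intro HinfI[of _ K] holomorphic_on_dilation assms(2,3)) auto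
qed

lemma poly_in_Hinf: "(\<lambda>z. poly p z) \<in> Hinf"
proof -
  have "bounded ((\<lambda>z. poly p z) ` cball 0 1)"
    by (intro compact_imp_bounded compact_continuous_image continuous_intros compact_cball)
  then obtain B where "\<forall>z\<in>cball 0 1. norm (poly p z) \<le> B" by (auto simp: bounded_iff)
  then show ?thesis by (intro HinfI[of _ B] holomorphic_intros) auto
qed

lemma norm_circle_mean_mult_cnj_le:
  assumes hphi: "phi holomorphic_on ball 0 1" and hu: "u holomorphic_on ball 0 1" and r: "0 \<le> r" "r < 1"
    and K: "\<And>t. norm (u (of_real r * cis t)) \<le> K"
  shows "norm (circle_mean r (\<lambda>z. phi z * cnj (u z))) \<le> K * circle_L1 phi r / (2*pi)"
proof -
  have c1: "continuous_on {0..2*pi} (\<lambda>t. phi (of_real r * cis t))" by (rule continuous_on_circle[OF hphi r])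
  have c2: "continuous_on {0..2*pi} (\<lambda>t. u (of_real r * cis t))" by (rule continuous_on_circle[OF hu r])
  have "norm (integral {0..2*pi} (\<lambda>t. phi (of_real r * cis t) * cnj (u (of_real r * cis t))))
      \<le> integral {0..2*pi} (\<lambda>t. K * norm (phi (of_real r * cis t)))"
  proof (rule integral_norm_bound_integral)
    show "(\<lambda>t. phi (of_real r * cis t) * cnj (u (of_real r * cis t))) integrable_on {0..2*pi}"
      "(\<lambda>t. K * norm (phi (of_real r * cis t))) integrable_on {0..2*pi}"
      by (intro integrable_continuous_real continuous_intros c1 c2)+
    show "norm (phi (of_real r * cis t) * cnj (u (of_real r * cis t))) \<le> K * norm (phi (of_real r * cis t))" for t
      using mult_left_mono[OF K[of t] norm_ge_zero[of "phi (of_real r * cis t)"]]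
      by (simp add: norm_mult mult.commute)
  qed
  also have "\<dots> = K * circle_L1 phi r" by simp
  finally show ?thesis by (simp add: circle_mean_def norm_divide divide_right_mono)
qed

lemma circle_mean_diff:
  assumes "continuous_on {0..2*pi} (\<lambda>t. F (of_real r * cis t))"
    "continuous_on {0..2*pi} (\<lambda>t. G (of_real r * cis t))"
  shows "circle_mean r (\<lambda>z. F z - G z) = circle_mean r F - circle_mean r G"
  using integral_diff[OF integrable_continuous_real[OF assms(1)] integrable_continuous_real[OF assms(2)]]
  by (simp add: circle_mean_def diff_divide_distrib)

lemma circle_mean_add:
  assumes "continuous_on {0..2*pi} (\<lambda>t. F (of_real r * cis t))"
    "continuous_on {0..2*pi} (\<lambda>t. G (of_real r * cis t))"
  shows "circle_mean r (\<lambda>z. F z + G z) = circle_mean r F + circle_mean r G"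
  using integral_add[OF integrable_continuous_real[OF assms(1)] integrable_continuous_real[OF assms(2)]]
  by (simp add: circle_mean_def add_divide_distrib)

lemma circle_L1_nonneg: "0 \<le> circle_L1 F r"
  by (cases "(\<lambda>t. norm (F (of_real r * cis t))) integrable_on {0..2*pi}")
     (auto intro: integral_nonneg simp: not_integrable_integral)

lemma norm_taylor_coeff_le_H1:
  assumes hol: "phi holomorphic_on ball 0 1"
    and M: "\<And>r. 0 \<le> r \<Longrightarrow> r < 1 \<Longrightarrow> circle_L1 phi r \<le> M"
  shows "norm (taylor_coeff phi k) \<le> M / (2 * pi)"
proof -
  have "norm (taylor_coeff phi k) * r ^ k \<le> M / (2 * pi)" if r: "0 \<le> r" "r < 1" for r
  proof -
    have "norm (integral {0..2*pi} (\<lambda>t. phi (of_real r * cis t) * cnj (cis t ^ k))) \<le> circle_L1 phi r"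
      by (rule integral_norm_bound_integral)
         (auto intro!: integrable_continuous_real continuous_intros continuous_on_circle[OF hol r]
           simp: norm_mult norm_power)
    then have "norm (2 * pi * (taylor_coeff phi k * of_real r ^ k)) \<le> M"
      unfolding integral_circle_cnj_cis_power[OF hol r] using M[OF r] by linarith
    then show ?thesis using r by (simp add: norm_mult norm_power field_simps)
  qed
  then have "eventually (\<lambda>r. norm (taylor_coeff phi k) * r ^ k \<le> M / (2 * pi)) (at_left (1::real))"
    unfolding eventually_at_left_field by (intro exI[of _ 0]) auto
  moreover have "((\<lambda>r. norm (taylor_coeff phi k) * r ^ k) \<longlongrightarrow> norm (taylor_coeff phi k) * 1 ^ k) (at_left 1)"
    by (intro tendsto_intros)
  ultimately show ?thesis using tendsto_upperbound by fastforce
qed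

lemma norm_taylor_coeff_le_Hinf:
  assumes hol: "u holomorphic_on ball 0 1" and K: "\<And>z. z \<in> ball 0 1 \<Longrightarrow> norm (u z) \<le> K"
  shows "norm (taylor_coeff u k) \<le> K"
proof -
  have "circle_L1 u r \<le> 2 * pi * K" if r: "0 \<le> r" "r < 1" for r
  proof -
    have "circle_L1 u r \<le> integral {0..2*pi} (\<lambda>t. K)"
      by (rule integral_le)
         (use r in \<open>auto intro!: integrable_continuous_real continuous_intros continuous_on_circle[OF hol] K
           simp: norm_mult\<close>)
    then show ?thesis by simp
  qed
  from norm_taylor_coeff_le_H1[OF hol this] show ?thesis by simp
qed

lemma Cauchy_of_norm_diff_le:
  fixes L :: "nat \<Rightarrow> 'a::real_normed_vector"
  assumes Ldiff: "\<And>n m. norm (L n - L m) \<le> ep n + ep m" and ep0: "ep \<longlonglongrightarrow> 0"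
  shows "Cauchy L"
proof (rule CauchyI)
  fix e :: real assume "0 < e"
  then obtain N where N: "\<And>n. N \<le> n \<Longrightarrow> ep n < e / 2"
    using order_tendstoD(2)[OF ep0, of "e / 2"] by (auto simp: eventually_sequentially)
  have "norm (L m - L n) < e" if "N \<le> m" "N \<le> n" for m n
    using Ldiff[of m n] N[OF that(1)] N[OF that(2)] by linarith
  then show "\<exists>M. \<forall>m\<ge>M. \<forall>n\<ge>M. norm (L m - L n) < e" by blast
qed

lemma tendsto_of_approximating_sequence:
  fixes P :: "'a \<Rightarrow> 'b::banach"
  assumes F: "F \<noteq> bot" and QL: "\<And>n. (Q n \<longlongrightarrow> L n) F"
    and PQ: "\<And>n. eventually (\<lambda>x. norm (P x - Q n x) \<le> ep n) F" and ep0: "ep \<longlonglongrightarrow> 0"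
  shows "\<exists>L. (P \<longlongrightarrow> L) F"
proof -
  have "norm (L n - L m) \<le> ep n + ep m" for n m
  proof (rule tendsto_upperbound[OF tendsto_norm[OF tendsto_diff[OF QL QL]] _ F])
    show "eventually (\<lambda>x. norm (Q n x - Q m x) \<le> ep n + ep m) F"
      using PQ[of n] PQ[of m]
    proof eventually_elim
      case (elim x)
      then show ?case using norm_triangle_ineq4[of "P x - Q m x" "P x - Q n x"] by (simp add: norm_minus_commute)
    qed
  qed
  then have "Cauchy L" using ep0 by (rule Cauchy_of_norm_diff_le)
  then obtain L0 where L0: "L \<longlonglongrightarrow> L0" using Cauchy_convergent_iff convergent_def by blast
  have "(P \<longlongrightarrow> L0) F"
  proof (rule tendstoI)
    fix e :: real assume e: "0 < e"
    have "eventually (\<lambda>n. dist (L n) L0 < e / 3) sequentially"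
      using e by (intro tendstoD[OF L0]) simp
    moreover have "eventually (\<lambda>n. ep n < e / 3) sequentially"
      using ep0 e by (intro order_tendstoD(2)) auto
    ultimately have "eventually (\<lambda>n. dist (L n) L0 < e / 3 \<and> ep n < e / 3) sequentially"
      by (rule eventually_conj)
    then obtain n where n: "norm (L n - L0) < e / 3" "ep n < e / 3"
      by (auto simp: eventually_sequentially dist_norm)
    have "eventually (\<lambda>x. dist (Q n x) (L n) < e / 3) F"
      using e by (intro tendstoD[OF QL]) simp
    then show "eventually (\<lambda>x. dist (P x) L0 < e) F"
      using PQ[of n]
    proof eventually_elim
      case (elim x)
      have "dist (P x) L0 \<le> norm (P x - Q n x) + dist (Q n x) (L n) + norm (L n - L0)"
        using norm_triangle_ineq[of "P x - Q n x" "(Q n x - L n) + (L n - L0)"]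
          norm_triangle_ineq[of "Q n x - L n" "L n - L0"]
        by (simp add: dist_norm algebra_simps)
      then show ?case using elim n by simp
    qed
  qed
  then show ?thesis by blast
qed

lemma tendsto_of_uniform_approximation:
  fixes P :: "'a \<Rightarrow> 'b::banach"
  assumes F: "F \<noteq> bot"
    and approx: "\<And>e. e > 0 \<Longrightarrow> \<exists>Q L. (Q \<longlongrightarrow> L) F \<and> eventually (\<lambda>x. norm (P x - Q x) \<le> e) F"
  shows "\<exists>L. (P \<longlongrightarrow> L) F"
proof -
  define ep where "ep = (\<lambda>n::nat. 1 / real (Suc n))"
  have "\<forall>n. \<exists>QL. (fst QL \<longlongrightarrow> snd QL) F \<and> eventually (\<lambda>x. norm (P x - fst QL x) \<le> ep n) F"
    using approx by (force simp: ep_def)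
  then have "\<exists>QL. \<forall>n. (fst (QL n) \<longlongrightarrow> snd (QL n)) F \<and> eventually (\<lambda>x. norm (P x - fst (QL n) x) \<le> ep n) F"
    by (rule choice)
  then obtain QL where QL: "\<forall>n. (fst (QL n) \<longlongrightarrow> snd (QL n)) F \<and> eventually (\<lambda>x. norm (P x - fst (QL n) x) \<le> ep n) F"
    by blast
  have "ep \<longlonglongrightarrow> 0"
    unfolding ep_def using LIMSEQ_inverse_real_of_nat by (simp add: inverse_eq_divide)
  with F show ?thesis
    using QL by (intro tendsto_of_approximating_sequence[of F "\<lambda>n. fst (QL n)" "\<lambda>n. snd (QL n)"]) auto
qed

lemma circle_mean_dilations_sums:
  assumes hphi: "phi holomorphic_on ball 0 1" and hu: "u holomorphic_on ball 0 1"
    and s: "0 \<le> s" "s \<le> 1" and s': "0 \<le> s'" "s' \<le> 1" and r: "0 \<le> r" "r < 1"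
  shows "(\<lambda>k. taylor_coeff phi k * cnj (taylor_coeff u k) * of_real (s * s' * r * r) ^ k) sums
           circle_mean r (\<lambda>z. phi (of_real s * z) * cnj (u (of_real s' * z)))"
proof -
  have a: "0 \<le> s * r" "s * r < 1" and b: "0 \<le> s' * r" "s' * r < 1"
    using s s' r by (auto intro: le_less_trans[OF mult_left_le_one_le])
  have "(\<lambda>k. 2 * pi * (taylor_coeff phi k * cnj (taylor_coeff u k) * of_real (s * r * (s' * r)) ^ k)
      / of_real (2 * pi)) sums
      (integral {0..2*pi} (\<lambda>t. phi (of_real (s * r) * cis t) * cnj (u (of_real (s' * r) * cis t)))
      / of_real (2 * pi))"
    by (rule sums_divide[OF integral_circle_pairing_sums[OF hphi a hu b]])
  then show ?thesis by (simp add: circle_mean_def mult_ac)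
qed

lemma circle_mean_dilation_swap:
  assumes "phi holomorphic_on ball 0 1" "w holomorphic_on ball 0 1"
    and "0 \<le> s" "s \<le> 1" and "0 \<le> r" "r < 1"
  shows "circle_mean r (\<lambda>z. phi (of_real s * z) * cnj (w z)) = circle_mean r (\<lambda>z. phi z * cnj (w (of_real s * z)))"
proof -
  have "(\<lambda>k. taylor_coeff phi k * cnj (taylor_coeff w k) * of_real (s * 1 * r * r) ^ k) sums
      circle_mean r (\<lambda>z. phi (of_real s * z) * cnj (w z))"
    using circle_mean_dilations_sums[OF assms(1-4) zero_le_one order_refl assms(5,6)] by simp
  moreover have "(\<lambda>k. taylor_coeff phi k * cnj (taylor_coeff w k) * of_real (s * 1 * r * r) ^ k) sums
      circle_mean r (\<lambda>z. phi z * cnj (w (of_real s * z)))"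
    using circle_mean_dilations_sums[OF assms(1,2) zero_le_one order_refl assms(3-6)] by (simp add: mult_ac)
  ultimately show ?thesis by (rule sums_unique2)
qed

lemma circle_mean_dilation_converges:
  assumes hphi: "phi holomorphic_on ball 0 1"
    and M: "\<And>r. 0 \<le> r \<Longrightarrow> r < 1 \<Longrightarrow> circle_L1 phi r \<le> M"
    and hu: "u holomorphic_on ball 0 1" and K: "\<And>z. z \<in> ball 0 1 \<Longrightarrow> norm (u z) \<le> K"
    and s: "0 \<le> s" "s < 1"
  shows "\<exists>L. ((\<lambda>r. circle_mean r (\<lambda>z. phi (of_real s * z) * cnj (u z))) \<longlongrightarrow> L) (at_left 1)"
proof -
  define a where "a = (\<lambda>k (r::real). taylor_coeff phi k * cnj (taylor_coeff u k) * of_real (s * 1 * r * r) ^ k)"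
  have lim: "((\<lambda>r. a k r) \<longlongrightarrow> a k 1) (at_left 1)" for k
    unfolding a_def by (intro tendsto_intros)
  have tp: "norm (taylor_coeff phi k) \<le> M / (2 * pi)" for k by (rule norm_taylor_coeff_le_H1[OF hphi M])
  have tu: "norm (taylor_coeff u k) \<le> K" for k by (rule norm_taylor_coeff_le_Hinf[OF hu K])
  have M0: "0 \<le> M / (2 * pi)" using tp[of 0] by (meson norm_ge_zero order_trans)
  have K0: "0 \<le> K" using tu[of 0] by (meson norm_ge_zero order_trans)
  have "eventually (\<lambda>(k, r). norm (a k r) \<le> M / (2 * pi) * K * s ^ k) (at_top \<times>\<^sub>F at_left (1::real))"
    unfolding eventually_prod_filter
  proof (intro exI conjI allI impI)
    show "eventually (\<lambda>k::nat. True) at_top" by simp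
    show "eventually (\<lambda>r. 0 < r \<and> r < (1::real)) (at_left 1)"
      by (rule eventually_at_left_1_unit_interval)
    fix k r assume r: "0 < r \<and> r < (1::real)"
    have "s * 1 * r * r \<le> s" using r s by (simp add: mult_le_one mult_left_le mult.assoc)
    then have p: "(s * 1 * r * r) ^ k \<le> s ^ k" using r s by (intro power_mono) auto
    have "norm (a k r) = norm (taylor_coeff phi k) * norm (taylor_coeff u k) * (s * 1 * r * r) ^ k"
      using r s by (simp add: a_def norm_mult norm_power)
    also have "\<dots> \<le> M / (2 * pi) * K * s ^ k"
      using tp[of k] tu[of k] p r s M0 K0 by (intro mult_mono mult_nonneg_nonneg) auto
    finally have "norm (a k r) \<le> M / (2 * pi) * K * s ^ k" .
    then show "case (k, r) of (k, r) \<Rightarrow> norm (a k r) \<le> M / (2 * pi) * K * s ^ k" by simp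
  qed
  moreover have "summable (\<lambda>k. M / (2 * pi) * K * s ^ k)"
    using s by (intro summable_mult summable_geometric) simp
  ultimately have "((\<lambda>r. \<Sum>k. a k r) \<longlongrightarrow> (\<Sum>k. a k 1)) (at_left 1)"
    using tannerys_theorem[OF lim] by simp
  moreover have "eventually (\<lambda>r. (\<Sum>k. a k r) = circle_mean r (\<lambda>z. phi (of_real s * z) * cnj (u z))) (at_left (1::real))"
    unfolding eventually_at_left_field
    using circle_mean_dilations_sums[OF hphi hu s(1) less_imp_le[OF s(2)], of 1] unfolding a_def
    by (intro exI[of _ 0]) (auto simp: sums_iff)
  ultimately have "((\<lambda>r. circle_mean r (\<lambda>z. phi (of_real s * z) * cnj (u z))) \<longlongrightarrow> (\<Sum>k. a k 1)) (at_left 1)"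
    by (rule Lim_transform_eventually)
  then show ?thesis by blast
qed

lemma norm_circle_mean_dilation_diff_le:
  assumes hphi: "phi holomorphic_on ball 0 1" and hu: "u holomorphic_on ball 0 1"
    and K: "\<And>z. z \<in> ball 0 1 \<Longrightarrow> norm (u z) \<le> K" and s: "0 \<le> s" "s \<le> 1" and r: "0 \<le> r" "r < 1"
  shows "norm (circle_mean r (\<lambda>z. phi z * cnj (u z)) - circle_mean r (\<lambda>z. phi (of_real s * z) * cnj (u z)))
    \<le> K * circle_L1 (\<lambda>z. phi z - phi (of_real s * z)) r / (2 * pi)"
proof -
  have hphis: "(\<lambda>z. phi (of_real s * z)) holomorphic_on ball 0 1"
    using s by (intro holomorphic_on_dilation hphi)
  have "circle_mean r (\<lambda>z. phi z * cnj (u z)) - circle_mean r (\<lambda>z. phi (of_real s * z) * cnj (u z))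
      = circle_mean r (\<lambda>z. phi z * cnj (u z) - phi (of_real s * z) * cnj (u z))"
    by (intro circle_mean_diff[symmetric] continuous_intros continuous_on_circle[OF hphi r]
        continuous_on_circle[OF hphis r] continuous_on_circle[OF hu r])
  also have "\<dots> = circle_mean r (\<lambda>z. (phi z - phi (of_real s * z)) * cnj (u z))"
    by (simp add: algebra_simps)
  finally have eq: "circle_mean r (\<lambda>z. phi z * cnj (u z)) - circle_mean r (\<lambda>z. phi (of_real s * z) * cnj (u z))
      = circle_mean r (\<lambda>z. (phi z - phi (of_real s * z)) * cnj (u z))" .
  have "norm (circle_mean r (\<lambda>z. (phi z - phi (of_real s * z)) * cnj (u z)))
      \<le> K * circle_L1 (\<lambda>z. phi z - phi (of_real s * z)) r / (2 * pi)"
    by (rule norm_circle_mean_mult_cnj_le)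
       (use r hphi hphis hu K in \<open>auto intro!: holomorphic_intros simp: norm_mult\<close>)
  then show ?thesis by (simp only: eq)
qed

lemma H1_Hinf_circle_mean_converges:
  assumes "phi \<in> H1" "u \<in> Hinf"
  shows "\<exists>L. ((\<lambda>r. circle_mean r (\<lambda>z. phi z * cnj (u z))) \<longlongrightarrow> L) (at_left 1)"
proof -
  obtain M where hphi: "phi holomorphic_on ball 0 1" and M: "\<And>r. 0 \<le> r \<Longrightarrow> r < 1 \<Longrightarrow> circle_L1 phi r \<le> M"
    using H1E[OF assms(1)] by blast
  obtain K where hu: "u holomorphic_on ball 0 1" and K: "\<And>z. z \<in> ball 0 1 \<Longrightarrow> norm (u z) \<le> K"
    using HinfE[OF assms(2)] by blast
  have K0: "0 \<le> K" by (rule bound_on_disc_nonneg[OF K])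
  show ?thesis
  proof (rule tendsto_of_uniform_approximation[OF trivial_limit_at_left_real])
    fix e :: real assume e: "e > 0"
    define eta where "eta = 2 * pi * e / (K + 1)"
    have "eventually (\<lambda>s. \<forall>r\<in>{0..<1}. circle_L1 (\<lambda>z. phi z - phi (of_real s * z)) r \<le> eta) (at_left 1)"
      using e K0 by (intro H1_dilation_close[OF hphi M]) (auto simp: eta_def)
    then obtain s where s: "0 < s" "s < 1"
      and close: "\<forall>r\<in>{0..<1}. circle_L1 (\<lambda>z. phi z - phi (of_real s * z)) r \<le> eta"
      by (rule eventually_at_left_1_obtain)
    obtain L where "((\<lambda>r. circle_mean r (\<lambda>z. phi (of_real s * z) * cnj (u z))) \<longlongrightarrow> L) (at_left 1)"
      using circle_mean_dilation_converges[OF hphi M hu K] s by fastforce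
    moreover have bound: "norm (circle_mean r (\<lambda>z. phi z * cnj (u z)) - circle_mean r (\<lambda>z. phi (of_real s * z) * cnj (u z))) \<le> e"
      if r: "0 < r" "r < 1" for r
    proof -
      have "norm (circle_mean r (\<lambda>z. phi z * cnj (u z)) - circle_mean r (\<lambda>z. phi (of_real s * z) * cnj (u z)))
          \<le> K * circle_L1 (\<lambda>z. phi z - phi (of_real s * z)) r / (2 * pi)"
        using r s by (intro norm_circle_mean_dilation_diff_le[OF hphi hu K]) auto
      also have "\<dots> \<le> K * eta / (2 * pi)"
        using close r K0 by (intro divide_right_mono mult_left_mono) auto
      also have "\<dots> = K / (K + 1) * e"
        using K0 by (simp add: eta_def field_simps add_nonneg_eq_0_iff)
      also have "\<dots> \<le> e" using K0 e by (intro mult_left_le_one_le) auto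
      finally show ?thesis .
    qed
    moreover have "eventually (\<lambda>r. norm (circle_mean r (\<lambda>z. phi z * cnj (u z))
        - circle_mean r (\<lambda>z. phi (of_real s * z) * cnj (u z))) \<le> e) (at_left 1)"
      by (rule eventually_mono[OF eventually_at_left_1_unit_interval]) (use bound in auto)
    ultimately show "\<exists>Q L. (Q \<longlongrightarrow> L) (at_left 1) \<and>
        eventually (\<lambda>r. norm (circle_mean r (\<lambda>z. phi z * cnj (u z)) - Q r) \<le> e) (at_left 1)"
      by blast
  qed
qed

lemma cauchy_pairing_tendsto:
  assumes "phi \<in> H1" "u \<in> Hinf"
  shows "((\<lambda>r. circle_mean r (\<lambda>z. phi z * cnj (u z))) \<longlongrightarrow> cauchy_pairing phi u) (at_left 1)"
proof -
  obtain L where L: "((\<lambda>r. circle_mean r (\<lambda>z. phi z * cnj (u z))) \<longlongrightarrow> L) (at_left 1)"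
    using H1_Hinf_circle_mean_converges[OF assms] by blast
  moreover have "cauchy_pairing phi u = L"
    unfolding cauchy_pairing_def by (rule tendsto_Lim[OF trivial_limit_at_left_real L])
  ultimately show ?thesis by simp
qed

lemma norm_cauchy_pairing_le:
  assumes "phi \<in> H1" "u \<in> Hinf"
    and "\<And>r. 0 < r \<Longrightarrow> r < 1 \<Longrightarrow> norm (circle_mean r (\<lambda>z. phi z * cnj (u z))) \<le> e"
  shows "norm (cauchy_pairing phi u) \<le> e"
proof (rule tendsto_upperbound[OF tendsto_norm[OF cauchy_pairing_tendsto[OF assms(1,2)]]])
  show "eventually (\<lambda>r. norm (circle_mean r (\<lambda>z. phi z * cnj (u z))) \<le> e) (at_left 1)"
    by (rule eventually_mono[OF eventually_at_left_1_unit_interval]) (use assms(3) in auto)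
qed simp

lemma norm_cauchy_pairing_le_bounds:
  assumes "phi \<in> H1" and M: "\<And>r. 0 \<le> r \<Longrightarrow> r < 1 \<Longrightarrow> circle_L1 phi r \<le> M"
    and "w \<in> Hinf" and K: "\<And>z. z \<in> ball 0 1 \<Longrightarrow> norm (w z) \<le> K"
  shows "norm (cauchy_pairing phi w) \<le> K * M / (2 * pi)"
proof (rule norm_cauchy_pairing_le[OF assms(1,3)])
  fix r :: real assume r: "0 < r" "r < 1"
  have K0: "0 \<le> K" by (rule bound_on_disc_nonneg[OF K])
  have "norm (circle_mean r (\<lambda>z. phi z * cnj (w z))) \<le> K * circle_L1 phi r / (2 * pi)"
    using r K by (intro norm_circle_mean_mult_cnj_le H1_holomorphic Hinf_holomorphic assms(1,3))
      (auto simp: norm_mult)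
  also have "\<dots> \<le> K * M / (2 * pi)" using M[of r] r K0 by (intro divide_right_mono mult_left_mono) auto
  finally show "norm (circle_mean r (\<lambda>z. phi z * cnj (w z))) \<le> K * M / (2 * pi)" .
qed

lemma cauchy_pairing_diff:
  assumes "phi \<in> H1" "u1 \<in> Hinf" "u2 \<in> Hinf"
  shows "cauchy_pairing phi (\<lambda>z. u1 z - u2 z) = cauchy_pairing phi u1 - cauchy_pairing phi u2"
proof -
  have "eventually (\<lambda>r. circle_mean r (\<lambda>z. phi z * cnj (u1 z)) - circle_mean r (\<lambda>z. phi z * cnj (u2 z))
      = circle_mean r (\<lambda>z. phi z * cnj (u1 z - u2 z))) (at_left 1)"
    using eventually_at_left_1_unit_interval
  proof (rule eventually_mono)
    fix r :: real assume r: "0 < r \<and> r < 1"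
    then have "circle_mean r (\<lambda>z. phi z * cnj (u1 z) - phi z * cnj (u2 z))
        = circle_mean r (\<lambda>z. phi z * cnj (u1 z)) - circle_mean r (\<lambda>z. phi z * cnj (u2 z))"
      using H1_holomorphic[OF assms(1)] Hinf_holomorphic[OF assms(2)] Hinf_holomorphic[OF assms(3)]
      by (intro circle_mean_diff continuous_intros continuous_on_circle) auto
    then show "circle_mean r (\<lambda>z. phi z * cnj (u1 z)) - circle_mean r (\<lambda>z. phi z * cnj (u2 z))
        = circle_mean r (\<lambda>z. phi z * cnj (u1 z - u2 z))"
      by (simp add: algebra_simps)
  qed
  with tendsto_diff[OF cauchy_pairing_tendsto[OF assms(1,2)] cauchy_pairing_tendsto[OF assms(1,3)]]
  have "((\<lambda>r. circle_mean r (\<lambda>z. phi z * cnj (u1 z - u2 z))) \<longlongrightarrow>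
      cauchy_pairing phi u1 - cauchy_pairing phi u2) (at_left 1)"
    by (rule Lim_transform_eventually)
  with cauchy_pairing_tendsto[OF assms(1) Hinf_diff[OF assms(2,3)]] show ?thesis
    by (rule tendsto_unique[OF trivial_limit_at_left_real])
qed

section \<open>Approximating \<open>f h\<close> weak-star by polynomial multiples of \<open>f\<close>\<close>

text \<open>Split \<open>\<phi> = (\<phi> - \<phi>\<^sub>s) + \<phi>\<^sub>s\<close> and move the dilation from \<open>\<phi>\<close> onto \<open>w\<close>.\<close>

lemma norm_cauchy_pairing_le_dilation_split:
  assumes phi: "phi \<in> H1" and M: "\<And>r. 0 \<le> r \<Longrightarrow> r < 1 \<Longrightarrow> circle_L1 phi r \<le> M"
    and w: "w \<in> Hinf" and K: "\<And>z. z \<in> ball 0 1 \<Longrightarrow> norm (w z) \<le> K"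
    and s: "0 \<le> s" "s \<le> 1"
    and close: "\<And>r. 0 \<le> r \<Longrightarrow> r < 1 \<Longrightarrow> circle_L1 (\<lambda>z. phi z - phi (of_real s * z)) r \<le> eta"
    and ws: "\<And>z. z \<in> ball 0 1 \<Longrightarrow> norm (w (of_real s * z)) \<le> kappa"
  shows "norm (cauchy_pairing phi w) \<le> K * eta / (2 * pi) + kappa * M / (2 * pi)"
proof (rule norm_cauchy_pairing_le[OF phi w])
  fix r :: real assume r: "0 < r" "r < 1"
  then have r0: "0 \<le> r" by simp
  have hphi: "phi holomorphic_on ball 0 1" and hw: "w holomorphic_on ball 0 1"
    using H1_holomorphic[OF phi] Hinf_holomorphic[OF w] .
  have hphis: "(\<lambda>z. phi (of_real s * z)) holomorphic_on ball 0 1" and hws: "(\<lambda>z. w (of_real s * z)) holomorphic_on ball 0 1"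
    using s by (intro holomorphic_on_dilation hphi hw; simp)+
  have K0: "0 \<le> K" by (rule bound_on_disc_nonneg[OF K])
  have kappa0: "0 \<le> kappa" by (rule bound_on_disc_nonneg[OF ws])
  have "circle_mean r (\<lambda>z. phi z * cnj (w z))
      = circle_mean r (\<lambda>z. (phi z - phi (of_real s * z)) * cnj (w z) + phi (of_real s * z) * cnj (w z))"
    by (simp add: algebra_simps)
  also have "\<dots> = circle_mean r (\<lambda>z. (phi z - phi (of_real s * z)) * cnj (w z))
      + circle_mean r (\<lambda>z. phi (of_real s * z) * cnj (w z))"
    by (intro circle_mean_add continuous_intros continuous_on_circle[OF hphi r0 r(2)]
        continuous_on_circle[OF hphis r0 r(2)] continuous_on_circle[OF hw r0 r(2)])
  also have "circle_mean r (\<lambda>z. phi (of_real s * z) * cnj (w z)) = circle_mean r (\<lambda>z. phi z * cnj (w (of_real s * z)))"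
    by (rule circle_mean_dilation_swap[OF hphi hw s r0 r(2)])
  finally have "norm (circle_mean r (\<lambda>z. phi z * cnj (w z)))
      \<le> norm (circle_mean r (\<lambda>z. (phi z - phi (of_real s * z)) * cnj (w z)))
        + norm (circle_mean r (\<lambda>z. phi z * cnj (w (of_real s * z))))"
    by (simp add: norm_triangle_ineq)
  also have "\<dots> \<le> K * circle_L1 (\<lambda>z. phi z - phi (of_real s * z)) r / (2 * pi) + kappa * circle_L1 phi r / (2 * pi)"
    using r by (intro add_mono norm_circle_mean_mult_cnj_le holomorphic_intros hphi hphis hw hws K ws)
      (auto simp: norm_mult)
  also have "\<dots> \<le> K * eta / (2 * pi) + kappa * M / (2 * pi)"
    using close[OF r0 r(2)] M[OF r0 r(2)] K0 kappa0
    by (intro add_mono divide_right_mono mult_left_mono) auto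
  finally show "norm (circle_mean r (\<lambda>z. phi z * cnj (w z))) \<le> K * eta / (2 * pi) + kappa * M / (2 * pi)" .
qed

lemma dilations_uniformly_close:
  assumes hol: "h holomorphic_on ball 0 1" and s: "0 \<le> s" "s < 1" and ep: "ep > 0"
  shows "eventually (\<lambda>\<rho>. \<forall>z\<in>cball 0 s. norm (h z - h (of_real \<rho> * z)) \<le> ep) (at_left 1)"
proof -
  have "uniformly_continuous_on (cball 0 s) h"
    using s by (intro compact_uniformly_continuous compact_cball
        holomorphic_on_imp_continuous_on[OF holomorphic_on_subset[OF hol]]) auto
  then obtain d where d: "d > 0"
    and dh: "\<And>x y. x \<in> cball 0 s \<Longrightarrow> y \<in> cball 0 s \<Longrightarrow> dist y x < d \<Longrightarrow> dist (h y) (h x) < ep"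
    unfolding uniformly_continuous_on_def using ep by metis
  have "norm (h z - h (of_real \<rho> * z)) \<le> ep" if \<rho>: "max 0 (1 - d) < \<rho>" "\<rho> < 1" and z: "z \<in> cball 0 s" for \<rho> z
  proof -
    have nz: "norm z \<le> 1" using z s by simp
    have "z - of_real \<rho> * z = of_real (1 - \<rho>) * z" by (simp add: algebra_simps)
    then have "dist (of_real \<rho> * z) z = norm (of_real (1 - \<rho>) * z)"
      by (metis dist_norm norm_minus_commute)
    also have "\<dots> = \<bar>1 - \<rho>\<bar> * norm z" by (simp only: norm_mult norm_of_real)
    also have "\<dots> = (1 - \<rho>) * norm z" using \<rho> by simp
    also have "\<dots> \<le> 1 - \<rho>" using \<rho> nz by (intro mult_left_le) auto
    also have "\<dots> < d" using \<rho> by simp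
    finally have dz: "dist (of_real \<rho> * z) z < d" .
    have "\<rho> * norm z \<le> norm z" using \<rho> by (intro mult_left_le_one_le) auto
    then have "of_real \<rho> * z \<in> cball 0 s" using z \<rho> by (simp add: norm_mult)
    then have "dist (h (of_real \<rho> * z)) (h z) < ep" by (rule dh[OF z _ dz])
    then show ?thesis by (simp add: dist_norm norm_minus_commute)
  qed
  then show ?thesis
    unfolding eventually_at_left_field by (intro exI[of _ "max 0 (1 - d)"]) (use d in auto)
qed

lemma norm_cauchy_pairing_mult_dilation_diff_le:
  assumes phi: "phi \<in> H1" and M: "\<And>r. 0 \<le> r \<Longrightarrow> r < 1 \<Longrightarrow> circle_L1 phi r \<le> M"
    and f: "f \<in> Hinf" and Kf: "\<And>z. z \<in> ball 0 1 \<Longrightarrow> norm (f z) \<le> Kf"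
    and h: "h \<in> Hinf" and Kh: "\<And>z. z \<in> ball 0 1 \<Longrightarrow> norm (h z) \<le> Kh"
    and \<rho>: "0 < \<rho>" "\<rho> < 1" and s: "0 < s" "s < 1"
    and close: "\<forall>r\<in>{0..<1}. circle_L1 (\<lambda>z. phi z - phi (of_real s * z)) r \<le> eta"
    and hclose: "\<forall>z\<in>cball 0 s. norm (h z - h (of_real \<rho> * z)) \<le> ep"
  shows "norm (cauchy_pairing phi (\<lambda>z. f z * h z) - cauchy_pairing phi (\<lambda>z. f z * h (of_real \<rho> * z)))
    \<le> 2 * Kf * Kh * eta / (2 * pi) + Kf * ep * M / (2 * pi)"
proof -
  have Kf0: "0 \<le> Kf" by (rule bound_on_disc_nonneg[OF Kf])
  have h\<rho>: "(\<lambda>z. h (of_real \<rho> * z)) \<in> Hinf" using \<rho> by (intro Hinf_dilation h) auto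
  define w where "w = (\<lambda>z. f z * h z - f z * h (of_real \<rho> * z))"
  have w: "w \<in> Hinf" unfolding w_def by (intro Hinf_diff Hinf_mult f h h\<rho>)
  have "norm (w z) \<le> 2 * Kf * Kh" if z: "z \<in> ball 0 1" for z
  proof -
    have "norm (w z) = norm (f z) * norm (h z - h (of_real \<rho> * z))"
      by (simp add: w_def norm_mult flip: right_diff_distrib)
    also have "\<dots> \<le> Kf * (Kh + Kh)"
      using Kf[OF z] Kh[OF z] Kh[OF dilation_in_ball[of \<rho>, OF _ _ z]] \<rho> Kf0
        norm_triangle_ineq4[of "h z" "h (of_real \<rho> * z)"]
      by (intro mult_mono) auto
    finally show ?thesis by simp
  qed
  moreover have "norm (w (of_real s * z)) \<le> Kf * ep" if z: "z \<in> ball 0 1" for z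
  proof -
    have "s * norm z \<le> s" "s * norm z \<le> norm z" "norm z < 1"
      using z s by (auto intro: mult_left_le mult_left_le_one_le)
    then have sz: "of_real s * z \<in> cball 0 s" "of_real s * z \<in> ball 0 1"
      using s by (auto simp: norm_mult)
    have "norm (w (of_real s * z)) = norm (f (of_real s * z)) * norm (h (of_real s * z) - h (of_real \<rho> * (of_real s * z)))"
      by (simp add: w_def norm_mult flip: right_diff_distrib)
    also have "\<dots> \<le> Kf * ep"
      using Kf[OF sz(2)] hclose sz(1) Kf0 by (intro mult_mono) auto
    finally show ?thesis .
  qed
  ultimately have "norm (cauchy_pairing phi w) \<le> 2 * Kf * Kh * eta / (2 * pi) + Kf * ep * M / (2 * pi)"
    using close s by (intro norm_cauchy_pairing_le_dilation_split[OF phi M w, where s = s]) auto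
  moreover have "cauchy_pairing phi w = cauchy_pairing phi (\<lambda>z. f z * h z) - cauchy_pairing phi (\<lambda>z. f z * h (of_real \<rho> * z))"
    unfolding w_def by (intro cauchy_pairing_diff phi Hinf_mult f h h\<rho>)
  ultimately show ?thesis by simp
qed

lemma cauchy_pairing_dilation_tendsto:
  assumes phi: "phi \<in> H1" and f: "f \<in> Hinf" and h: "h \<in> Hinf"
  shows "((\<lambda>\<rho>. cauchy_pairing phi (\<lambda>z. f z * h (of_real \<rho> * z))) \<longlongrightarrow> cauchy_pairing phi (\<lambda>z. f z * h z))
      (at_left 1)"
proof (rule tendstoI)
  fix e :: real assume e: "0 < e"
  obtain M where M: "\<And>r. 0 \<le> r \<Longrightarrow> r < 1 \<Longrightarrow> circle_L1 phi r \<le> M" using H1E[OF phi] by blast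
  obtain Kf where Kf: "\<And>z. z \<in> ball 0 1 \<Longrightarrow> norm (f z) \<le> Kf"
    using HinfE[OF f] by blast
  obtain Kh where hh: "h holomorphic_on ball 0 1" and Kh: "\<And>z. z \<in> ball 0 1 \<Longrightarrow> norm (h z) \<le> Kh"
    using HinfE[OF h] by blast
  have M0: "0 \<le> M" using M[of 0] circle_L1_nonneg[of phi 0] by linarith
  have Kf0: "0 \<le> Kf" by (rule bound_on_disc_nonneg[OF Kf])
  have Kh0: "0 \<le> Kh" by (rule bound_on_disc_nonneg[OF Kh])
  define Kw where "Kw = 2 * Kf * Kh"
  define eta where "eta = pi * e / (2 * (Kw + 1))"
  define ep where "ep = e / (4 * (Kf + 1) * (M + 1))"
  have Kw0: "0 \<le> Kw" using Kf0 Kh0 by (simp add: Kw_def)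
  have "eventually (\<lambda>s. \<forall>r\<in>{0..<1}. circle_L1 (\<lambda>z. phi z - phi (of_real s * z)) r \<le> eta) (at_left 1)"
    using e Kw0 by (intro H1_dilation_close[OF H1_holomorphic[OF phi] M]) (auto simp: eta_def)
  then obtain s where s: "0 < s" "s < 1"
    and close: "\<forall>r\<in>{0..<1}. circle_L1 (\<lambda>z. phi z - phi (of_real s * z)) r \<le> eta"
    by (rule eventually_at_left_1_obtain)
  have small: "Kw * eta / (2 * pi) + Kf * ep * M / (2 * pi) < e"
  proof -
    have "Kw * eta / (2 * pi) = Kw / (Kw + 1) * (e / 4)"
      using Kw0 by (simp add: eta_def field_simps add_nonneg_eq_0_iff)
    also have "\<dots> \<le> e / 4" using Kw0 e by (intro mult_left_le_one_le) auto
    finally have 1: "Kw * eta / (2 * pi) \<le> e / 4" .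
    have "Kf * ep * M / (2 * pi) = Kf / (Kf + 1) * (M / (M + 1)) * (e / (8 * pi))"
      using Kf0 M0 by (simp add: ep_def field_simps add_nonneg_eq_0_iff)
    also have "\<dots> \<le> e / (8 * pi)"
      using Kf0 M0 e by (intro mult_left_le_one_le mult_le_one) auto
    also have "\<dots> \<le> e / 4" using e pi_ge_two by (simp add: field_simps)
    finally show ?thesis using 1 e by linarith
  qed
  have "eventually (\<lambda>\<rho>. (0 < \<rho> \<and> \<rho> < 1) \<and> (\<forall>z\<in>cball 0 s. norm (h z - h (of_real \<rho> * z)) \<le> ep)) (at_left 1)"
    using e Kf0 M0 s
    by (intro eventually_conj eventually_at_left_1_unit_interval dilations_uniformly_close[OF hh])
       (auto simp: ep_def)
  then show "eventually (\<lambda>\<rho>. dist (cauchy_pairing phi (\<lambda>z. f z * h (of_real \<rho> * z)))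
      (cauchy_pairing phi (\<lambda>z. f z * h z)) < e) (at_left 1)"
  proof (rule eventually_mono, elim conjE)
    fix \<rho> :: real assume "0 < \<rho>" "\<rho> < 1" "\<forall>z\<in>cball 0 s. norm (h z - h (of_real \<rho> * z)) \<le> ep"
    then have "norm (cauchy_pairing phi (\<lambda>z. f z * h z) - cauchy_pairing phi (\<lambda>z. f z * h (of_real \<rho> * z)))
        \<le> Kw * eta / (2 * pi) + Kf * ep * M / (2 * pi)"
      unfolding Kw_def using s close by (intro norm_cauchy_pairing_mult_dilation_diff_le[OF phi M f Kf h Kh])
    then show "dist (cauchy_pairing phi (\<lambda>z. f z * h (of_real \<rho> * z))) (cauchy_pairing phi (\<lambda>z. f z * h z)) < e"
      using small by (simp add: dist_norm norm_minus_commute)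
  qed
qed

lemma norm_dilation_minus_taylor_poly_le:
  assumes hh: "h holomorphic_on ball 0 1" and Kh: "\<And>z. z \<in> ball 0 1 \<Longrightarrow> norm (h z) \<le> Kh"
    and \<rho>: "0 \<le> \<rho>" "\<rho> < 1" and z: "z \<in> ball 0 1"
  shows "norm (h (of_real \<rho> * z) - (\<Sum>k<N. taylor_coeff h k * of_real \<rho> ^ k * z ^ k))
       \<le> Kh * \<rho> ^ N / (1 - \<rho>)"
proof -
  define c where "c = (\<lambda>k. taylor_coeff h k * (of_real \<rho> * z) ^ k)"
  have nz: "norm z < 1" using z by simp
  have "c sums h (of_real \<rho> * z)"
    unfolding c_def using \<rho> nz
    by (intro taylor_coeff_sums[OF hh]) (auto simp: norm_mult intro: le_less_trans[OF mult_left_le_one_le])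
  then have tail: "(\<lambda>k. c (k + N)) sums (h (of_real \<rho> * z) - (\<Sum>k<N. c k))"
    using sums_split_initial_segment[of c _ N] by simp
  have le: "norm (c (k + N)) \<le> Kh * \<rho> ^ N * \<rho> ^ k" for k
  proof -
    have "norm ((of_real \<rho> * z) ^ (k + N)) = (\<rho> * norm z) ^ (k + N)"
      using \<rho> by (simp add: norm_mult norm_power)
    also have "\<dots> \<le> \<rho> ^ (k + N)" using \<rho> nz by (intro power_mono mult_left_le) auto
    finally have "norm (taylor_coeff h (k + N)) * norm ((of_real \<rho> * z) ^ (k + N)) \<le> Kh * \<rho> ^ (k + N)"
      using norm_taylor_coeff_le_Hinf[OF hh Kh, of "k + N"] by (intro mult_mono) (auto intro: order_trans[OF norm_ge_zero])
    then show ?thesis by (simp add: c_def norm_mult power_add mult_ac)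
  qed
  have geom: "(\<lambda>k. Kh * \<rho> ^ N * \<rho> ^ k) sums (Kh * \<rho> ^ N * (1 / (1 - \<rho>)))"
    using \<rho> by (intro sums_mult geometric_sums) simp
  have summable: "summable (\<lambda>k. norm (c (k + N)))"
    by (rule summable_comparison_test[OF _ sums_summable[OF geom]]) (use le in auto)
  have "norm (h (of_real \<rho> * z) - (\<Sum>k<N. c k)) = norm (\<Sum>k. c (k + N))"
    using sums_unique[OF tail] by simp
  also have "\<dots> \<le> (\<Sum>k. norm (c (k + N)))" by (rule summable_norm[OF summable])
  also have "\<dots> \<le> (\<Sum>k. Kh * \<rho> ^ N * \<rho> ^ k)" by (rule suminf_le[OF le summable sums_summable[OF geom]])
  also have "\<dots> = Kh * \<rho> ^ N / (1 - \<rho>)" using sums_unique[OF geom] by simp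
  finally show ?thesis by (simp add: c_def power_mult_distrib mult.assoc)
qed

lemma cauchy_pairing_taylor_poly_tendsto:
  assumes phi: "phi \<in> H1" and f: "f \<in> Hinf" and h: "h \<in> Hinf" and \<rho>: "0 \<le> \<rho>" "\<rho> < 1"
  shows "(\<lambda>N. cauchy_pairing phi (\<lambda>z. f z * (\<Sum>k<N. taylor_coeff h k * of_real \<rho> ^ k * z ^ k)))
       \<longlonglongrightarrow> cauchy_pairing phi (\<lambda>z. f z * h (of_real \<rho> * z))"
proof -
  obtain M where M: "\<And>r. 0 \<le> r \<Longrightarrow> r < 1 \<Longrightarrow> circle_L1 phi r \<le> M" using H1E[OF phi] by blast
  obtain Kf where Kf: "\<And>z. z \<in> ball 0 1 \<Longrightarrow> norm (f z) \<le> Kf" using HinfE[OF f] by blast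
  obtain Kh where hh: "h holomorphic_on ball 0 1" and Kh: "\<And>z. z \<in> ball 0 1 \<Longrightarrow> norm (h z) \<le> Kh"
    using HinfE[OF h] by blast
  have Kf0: "0 \<le> Kf" by (rule bound_on_disc_nonneg[OF Kf])
  define T where "T N z = (\<Sum>k<N. taylor_coeff h k * of_real \<rho> ^ k * z ^ k)" for N z
  have T: "T N \<in> Hinf" for N
  proof -
    have "T N = (\<lambda>z. poly (\<Sum>k<N. monom (taylor_coeff h k * of_real \<rho> ^ k) k) z)"
      by (simp add: fun_eq_iff T_def poly_sum poly_monom)
    then show ?thesis by (simp only: poly_in_Hinf)
  qed
  have h\<rho>: "(\<lambda>z. h (of_real \<rho> * z)) \<in> Hinf" using \<rho> by (intro Hinf_dilation h) auto
  have bound: "norm (cauchy_pairing phi (\<lambda>z. f z * h (of_real \<rho> * z)) - cauchy_pairing phi (\<lambda>z. f z * T N z))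
      \<le> Kf * (Kh * \<rho> ^ N / (1 - \<rho>)) * M / (2 * pi)" for N
  proof -
    have "norm (f z * h (of_real \<rho> * z) - f z * T N z) \<le> Kf * (Kh * \<rho> ^ N / (1 - \<rho>))" if "z \<in> ball 0 1" for z
      unfolding T_def right_diff_distrib[symmetric] norm_mult
      using Kf[OF that] norm_dilation_minus_taylor_poly_le[OF hh Kh \<rho> that] Kf0
      by (intro mult_mono) auto
    then have "norm (cauchy_pairing phi (\<lambda>z. f z * h (of_real \<rho> * z) - f z * T N z))
        \<le> Kf * (Kh * \<rho> ^ N / (1 - \<rho>)) * M / (2 * pi)"
      by (intro norm_cauchy_pairing_le_bounds[OF phi M] Hinf_diff Hinf_mult f h\<rho> T)
    then show ?thesis by (simp only: cauchy_pairing_diff[OF phi Hinf_mult[OF f h\<rho>] Hinf_mult[OF f T]])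
  qed
  have "(\<lambda>N. Kf * (Kh * \<rho> ^ N / (1 - \<rho>)) * M / (2 * pi)) \<longlonglongrightarrow> Kf * (Kh * 0 / (1 - \<rho>)) * M / (2 * pi)"
    using \<rho> by (intro tendsto_intros LIMSEQ_power_zero) auto
  then have lim: "(\<lambda>N. Kf * (Kh * \<rho> ^ N / (1 - \<rho>)) * M / (2 * pi)) \<longlonglongrightarrow> 0" by simp
  have "(\<lambda>N. cauchy_pairing phi (\<lambda>z. f z * h (of_real \<rho> * z)) - cauchy_pairing phi (\<lambda>z. f z * T N z))
      \<longlonglongrightarrow> 0"
    by (rule Lim_null_comparison[OF always_eventually lim]) (use bound in blast)
  from tendsto_diff[OF tendsto_const[of "cauchy_pairing phi (\<lambda>z. f z * h (of_real \<rho> * z))"] this]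
  show ?thesis unfolding T_def by simp
qed

lemma exists_poly_multiple_pairing_close:
  assumes Phi: "finite Phi" "Phi \<subseteq> H1" and f: "f \<in> Hinf" and h: "h \<in> Hinf" and e: "e > 0"
  shows "\<exists>p\<in>analytic_polys. \<forall>phi\<in>Phi.
           norm (cauchy_pairing phi (\<lambda>z. p z * f z) - cauchy_pairing phi (\<lambda>z. f z * h z)) < e"
proof -
  have "eventually (\<lambda>\<rho>. \<forall>phi\<in>Phi. dist (cauchy_pairing phi (\<lambda>z. f z * h (of_real \<rho> * z)))
      (cauchy_pairing phi (\<lambda>z. f z * h z)) < e / 2) (at_left 1)"
    using Phi e by (intro eventually_ball_finite ballI tendstoD[OF cauchy_pairing_dilation_tendsto[OF _ f h]]) auto
  then obtain \<rho> where \<rho>: "0 < \<rho>" "\<rho> < 1" and close1: "\<forall>phi\<in>Phi.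
      dist (cauchy_pairing phi (\<lambda>z. f z * h (of_real \<rho> * z))) (cauchy_pairing phi (\<lambda>z. f z * h z)) < e / 2"
    by (rule eventually_at_left_1_obtain)
  define T where "T N z = (\<Sum>k<N. taylor_coeff h k * of_real \<rho> ^ k * z ^ k)" for N z
  have "eventually (\<lambda>N. \<forall>phi\<in>Phi. dist (cauchy_pairing phi (\<lambda>z. f z * T N z))
      (cauchy_pairing phi (\<lambda>z. f z * h (of_real \<rho> * z))) < e / 2) sequentially"
    using Phi e \<rho> unfolding T_def
    by (intro eventually_ball_finite ballI tendstoD[OF cauchy_pairing_taylor_poly_tendsto[OF _ f h]]) auto
  then obtain N where close2: "\<forall>phi\<in>Phi.
      dist (cauchy_pairing phi (\<lambda>z. f z * T N z)) (cauchy_pairing phi (\<lambda>z. f z * h (of_real \<rho> * z))) < e / 2"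
    by (auto simp: eventually_sequentially)
  define p where "p z = poly (\<Sum>k<N. monom (taylor_coeff h k * of_real \<rho> ^ k) k) z" for z
  have "p \<in> analytic_polys" unfolding p_def analytic_polys_def by blast
  moreover have pf: "(\<lambda>z. p z * f z) = (\<lambda>z. f z * T N z)"
    by (simp add: fun_eq_iff p_def T_def poly_sum poly_monom mult.commute)
  moreover have "norm (cauchy_pairing phi (\<lambda>z. p z * f z) - cauchy_pairing phi (\<lambda>z. f z * h z)) < e"
    if "phi \<in> Phi" for phi
  proof -
    have "dist (cauchy_pairing phi (\<lambda>z. f z * T N z)) (cauchy_pairing phi (\<lambda>z. f z * h (of_real \<rho> * z))) < e / 2"
      using close2 that by blast
    moreover have "dist (cauchy_pairing phi (\<lambda>z. f z * h z)) (cauchy_pairing phi (\<lambda>z. f z * h (of_real \<rho> * z))) < e / 2"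
      using close1 that by (simp add: dist_commute)
    ultimately have "dist (cauchy_pairing phi (\<lambda>z. f z * T N z)) (cauchy_pairing phi (\<lambda>z. f z * h z)) < e"
      by (rule dist_triangle_half_l)
    then show ?thesis by (simp add: pf dist_norm)
  qed
  ultimately show ?thesis by blast
qed

lemma weak_star_closure_mono:
  assumes "S \<subseteq> T"
  shows "weak_star_closure X N S \<subseteq> weak_star_closure X N T"
  using assms unfolding weak_star_closure_def by blast

lemma weak_star_closure_subset_if_approximable:
  assumes "\<And>s F e. s \<in> S \<Longrightarrow> finite F \<Longrightarrow> F \<subseteq> X \<Longrightarrow> e > 0 \<Longrightarrow>
     \<exists>t\<in>T. \<forall>phi\<in>F. norm (cauchy_pairing phi t - cauchy_pairing phi s) < e"
  shows "weak_star_closure X N S \<subseteq> weak_star_closure X N T"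
proof
  fix g assume g: "g \<in> weak_star_closure X N S"
  have "\<exists>t\<in>T. \<forall>phi\<in>F. norm (cauchy_pairing phi t - cauchy_pairing phi g) < e"
    if F: "finite F" "F \<subseteq> X" and e: "e > 0" for F e
  proof -
    have e2: "e / 2 > 0" using e by simp
    obtain s where "s \<in> S" and s: "\<forall>phi\<in>F. norm (cauchy_pairing phi s - cauchy_pairing phi g) < e / 2"
      using g F e2 unfolding weak_star_closure_def by blast
    obtain t where "t \<in> T" and t: "\<forall>phi\<in>F. norm (cauchy_pairing phi t - cauchy_pairing phi s) < e / 2"
      using assms[OF \<open>s \<in> S\<close> F e2] by blast
    have "norm (cauchy_pairing phi t - cauchy_pairing phi g) < e" if "phi \<in> F" for phi
    proof -
      have "norm (cauchy_pairing phi t - cauchy_pairing phi g)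
          \<le> norm (cauchy_pairing phi t - cauchy_pairing phi s) + norm (cauchy_pairing phi s - cauchy_pairing phi g)"
        using norm_triangle_ineq[of "cauchy_pairing phi t - cauchy_pairing phi s"
            "cauchy_pairing phi s - cauchy_pairing phi g"] by simp
      then show ?thesis using s[rule_format, OF that] t[rule_format, OF that] by linarith
    qed
    with \<open>t \<in> T\<close> show ?thesis by blast
  qed
  moreover have "g \<in> cauchy_dual X N" using g by (simp add: weak_star_closure_def)
  ultimately show "g \<in> weak_star_closure X N T" unfolding weak_star_closure_def by simp
qed

theorem proposition2p2:
  fixes X :: "(complex \<Rightarrow> complex) set" and N :: "(complex \<Rightarrow> complex) \<Rightarrow> real"
    and f :: "complex \<Rightarrow> complex"
  assumes "regular_fun_space X N" and "f \<in> Hinf"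
  shows "weak_star_closure X N {(\<lambda>z. f z * h z) | h. h \<in> Hinf} = dual_invariant_subspace X N f"
proof
  have "X \<subseteq> H1" using assms(1) by (simp add: regular_fun_space_def)
  show "weak_star_closure X N {(\<lambda>z. f z * h z) | h. h \<in> Hinf} \<subseteq> dual_invariant_subspace X N f"
    unfolding dual_invariant_subspace_def
  proof (rule weak_star_closure_subset_if_approximable)
    fix s F and e :: real assume "s \<in> {(\<lambda>z. f z * h z) | h. h \<in> Hinf}" "finite F" "F \<subseteq> X" "e > 0"
    then obtain h p where "s = (\<lambda>z. f z * h z)" "p \<in> analytic_polys"
      "\<forall>phi\<in>F. norm (cauchy_pairing phi (\<lambda>z. p z * f z) - cauchy_pairing phi (\<lambda>z. f z * h z)) < e"
      using exists_poly_multiple_pairing_close[OF _ _ assms(2)] \<open>X \<subseteq> H1\<close> by blast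
    then show "\<exists>t\<in>{(\<lambda>z. p z * f z) | p. p \<in> analytic_polys}.
        \<forall>phi\<in>F. norm (cauchy_pairing phi t - cauchy_pairing phi s) < e" by blast
  qed
  have "{(\<lambda>z. p z * f z) | p. p \<in> analytic_polys} \<subseteq> {(\<lambda>z. f z * h z) | h. h \<in> Hinf}"
    using poly_in_Hinf by (fastforce simp: analytic_polys_def mult.commute)
  then show "dual_invariant_subspace X N f \<subseteq> weak_star_closure X N {(\<lambda>z. f z * h z) | h. h \<in> Hinf}"
    unfolding dual_invariant_subspace_def by (rule weak_star_closure_mono)
qed

end
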